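(* Let $N\geq 3$ be a prime integer and let $q\in\mathbb{C}$ satisfy $q^N=1$, $q\neq 1$. Let $X\subset\mathbb{R}^{N-1}$ be a nonempty convex subspace. Then the index map $\eta:(C^q_*(X),\partial)\to(\mathbb{Z}[q],[*]_q)$ induces an isomorphism in amplitude homology; that is, for every amplitude $1\leq m\leq N-1$ and every degree $n\in\mathbb{Z}$, the induced map $H_{m,n}(C^q_*(X))\to H_{m,n}(\mathbb{Z}[q],[*]_q)$ is an isomorphism of $\mathbb{Z}[q]$-modules.
   Context: $q$-numbers: $[k]_q=1+q+\cdots+q^{k-1}$ for $k\geq 1$. Singular $q$-chains: for a topological space $X$, $C^q_n(X)$ is the free $\mathbb{Z}[q]$-module with basis the continuous maps $\sigma:\Delta^n\to X$ (singular $n$-simplices), where $\Delta^n\subset\mathbb{R}^{n+1}$ is the convex hull of the standard basis $e_0,\dots,e_n$; $C^q_n(X)=0$ for $n<0$. For $0\leq j\leq n$, the $j$-th face of an $n$-simplex $\sigma$ ($n\geq 1$) is $\partial_j\sigma=\sigma\circ\lambda_j$, where $\lambda_j:\Delta^{n-1}\to\Delta^n$ is the affine map sending $e_0,\dots,e_{n-1}$ in order to $e_0,\dots,\widehat{e_j},\dots,e_n$. The border map $\partial:C^q_n(X)\to C^q_{n-1}(X)$ is the linear map $\partial=\sum_{j=0}^n q^j\partial_j$ for $n\ge1$, and $\partial=0$ on $C^q_0(X)$; one has $\partial^N=0$. Amplitude homology: for a graded module $M_*$ with a degree $-1$ endomorphism $\partial$ satisfying $\partial^N=0$, and $1\leq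 m\leq N-1$, $H_{m,n}(M)=\ker(\partial^m:M_n\to M_{n-m})/\operatorname{im}(\partial^{N-m}:M_{n+N-m}\to M_n)$. The $N$-complex $(\mathbb{Z}[q],[*]_q)$ has $\mathbb{Z}[q]$ in each degree $0\leq n\leq N-2$ and $0$ in all other degrees, with differential from degree $n$ to degree $n-1$ given by multiplication by $[n+1]_q$ for $1\leq n\leq N-2$ (and zero otherwise). The index map $\eta$ is the $\mathbb{Z}[q]$-linear graded map sending each singular $n$-simplex to $1\in\mathbb{Z}[q]$ in degree $n$ for $0\leq n\leq N-2$, and sending $C^q_n(X)$ to $0$ for $n\geq N-1$; it commutes with the differentials. *)

theory Defs
  imports "HOL-Analysis.Analysis" "HOL-Homology.Homology" "HOL-Library.Function_Algebras"
begin

definition Zq :: "complex \<Rightarrow> complex set" where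
  "Zq q = {z. \<exists>p::int poly. z = poly (map_poly of_int p) q}"

definition qnum :: "complex \<Rightarrow> nat \<Rightarrow> complex" where
  "qnum q k = (\<Sum>i<k. q ^ i)"

fun dpow :: "(int \<Rightarrow> 'v \<Rightarrow> 'v) \<Rightarrow> nat \<Rightarrow> int \<Rightarrow> 'v \<Rightarrow> 'v" where
  "dpow d 0 n x = x"
| "dpow d (Suc k) n x = d (n - int k) (dpow d k n x)"

definition amp_ker :: "(int \<Rightarrow> 'v::ab_group_add set) \<Rightarrow> (int \<Rightarrow> 'v \<Rightarrow> 'v) \<Rightarrow> nat \<Rightarrow> int \<Rightarrow> 'v set" where
  "amp_ker M d m n = {x \<in> M n. dpow d m n x = 0}"

definition amp_im :: "(int \<Rightarrow> 'v::ab_group_add set) \<Rightarrow> (int \<Rightarrow> 'v \<Rightarrow> 'v) \<Rightarrow> nat \<Rightarrow> nat \<Rightarrow> int \<Rightarrow> 'v set" where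
  "amp_im M d N m n = dpow d (N - m) (n + int (N - m)) ` M (n + int (N - m))"

definition amp_rel :: "(int \<Rightarrow> 'v::ab_group_add set) \<Rightarrow> (int \<Rightarrow> 'v \<Rightarrow> 'v) \<Rightarrow> nat \<Rightarrow> nat \<Rightarrow> int \<Rightarrow> ('v \<times> 'v) set" where
  "amp_rel M d N m n = {(x, y). x \<in> amp_ker M d m n \<and> y \<in> amp_ker M d m n \<and> x - y \<in> amp_im M d N m n}"

text \<open>H_{m,n}(M) = ker(d^m : M_n -> M_{n-m}) / im(d^{N-m} : M_{n+N-m} -> M_n), as a set of cosets.\<close>
definition amp_hom :: "(int \<Rightarrow> 'v::ab_group_add set) \<Rightarrow> (int \<Rightarrow> 'v \<Rightarrow> 'v) \<Rightarrow> nat \<Rightarrow> nat \<Rightarrow> int \<Rightarrow> 'v set set" where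
  "amp_hom M d N m n = amp_ker M d m n // amp_rel M d N m n"

definition amp_induced :: "(int \<Rightarrow> 'v \<Rightarrow> 'w) \<Rightarrow> (int \<Rightarrow> 'w::ab_group_add set) \<Rightarrow> (int \<Rightarrow> 'w \<Rightarrow> 'w)
     \<Rightarrow> nat \<Rightarrow> nat \<Rightarrow> int \<Rightarrow> 'v set \<Rightarrow> 'w set" where
  "amp_induced f M' d' N m n C = amp_rel M' d' N m n `` (f n ` C)"

definition qchains :: "complex \<Rightarrow> 'a topology \<Rightarrow> int \<Rightarrow> (((nat \<Rightarrow> real) \<Rightarrow> 'a) \<Rightarrow> complex) set" where
  "qchains q X n = {c. finite {\<sigma>. c \<sigma> \<noteq> 0} \<and> (\<forall>\<sigma>. c \<sigma> \<in> Zq q)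
       \<and> (\<forall>\<sigma>. c \<sigma> \<noteq> 0 \<longrightarrow> n \<ge> 0 \<and> singular_simplex (nat n) X \<sigma>)}"

definition qbd :: "complex \<Rightarrow> int \<Rightarrow> (((nat \<Rightarrow> real) \<Rightarrow> 'a) \<Rightarrow> complex) \<Rightarrow> (((nat \<Rightarrow> real) \<Rightarrow> 'a) \<Rightarrow> complex)" where
  "qbd q n c = (if n \<ge> 1 then
      (\<lambda>\<tau>. \<Sum>\<sigma>\<in>{\<sigma>. c \<sigma> \<noteq> 0}. c \<sigma> * (\<Sum>j\<le>nat n. if singular_face (nat n) j \<sigma> = \<tau> then q ^ j else 0))
    else 0)"

definition zq_cx :: "complex \<Rightarrow> nat \<Rightarrow> int \<Rightarrow> complex set" where
  "zq_cx q N n = (if 0 \<le> n \<and> n \<le> int N - 2 then Zq q else {0})"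

definition zq_d :: "complex \<Rightarrow> nat \<Rightarrow> int \<Rightarrow> complex \<Rightarrow> complex" where
  "zq_d q N n x = (if 1 \<le> n \<and> n \<le> int N - 2 then qnum q (nat n + 1) * x else 0)"

definition eta :: "nat \<Rightarrow> int \<Rightarrow> (((nat \<Rightarrow> real) \<Rightarrow> 'a) \<Rightarrow> complex) \<Rightarrow> complex" where
  "eta N n c = (if 0 \<le> n \<and> n \<le> int N - 2 then (\<Sum>\<sigma>\<in>{\<sigma>. c \<sigma> \<noteq> 0}. c \<sigma>) else 0)"

end

theory Submission
  imports Defs
begin

text \<open>
  Coning off from a point \<open>x\<^sub>0 \<in> X\<close> gives a q-contracting homotopy \<open>h\<close> with
  \<open>\<partial>h - q h\<partial> = id\<close> in positive degrees, and also in degree 0 on chains of augmentation 0.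
  Iterating on a cycle \<open>y\<close> yields \<open>\<partial>\<^sup>j h\<^sup>j y = [j]\<^sub>q! y\<close>; since \<open>N\<close> is prime, every
  \<open>[j]\<^sub>q\<close> with \<open>0 < j < N\<close> is a unit of \<open>\<int>[q]\<close>, so every cycle is an \<open>(N-1)\<close>-fold
  border. Induction on the amplitude \<open>m\<close> then gives \<open>ker \<partial>\<^sup>m = im \<partial>\<^sup>N\<^sup>-\<^sup>m\<close> in every degree
  except \<open>m - 1\<close>, where the augmentation is the only obstruction; the constant simplices, with
  \<open>\<partial> c\<^sub>n = [n+1]\<^sub>q c\<^sub>n\<^sub>-\<^sub>1\<close>, show that the same obstruction is all that survives in
  \<open>(\<int>[q], [*]\<^sub>q)\<close>.
\<close>

lemma map_poly_of_int_add:
  "map_poly (of_int :: int \<Rightarrow> complex) (p + r) = map_poly of_int p + map_poly of_int r"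
  by (rule poly_eqI) (simp add: coeff_map_poly)

lemma map_poly_of_int_diff:
  "map_poly (of_int :: int \<Rightarrow> complex) (p - r) = map_poly of_int p - map_poly of_int r"
  by (rule poly_eqI) (simp add: coeff_map_poly)

lemma Zq_add: assumes "x \<in> Zq q" "y \<in> Zq q" shows "x + y \<in> Zq q"
proof -
  obtain p r where "x = poly (map_poly of_int p) q" "y = poly (map_poly of_int r) q"
    using assms unfolding Zq_def by auto
  then have "x + y = poly (map_poly of_int (p + r)) q" by (simp add: map_poly_of_int_add)
  then show ?thesis unfolding Zq_def by blast
qed

lemma Zq_diff: assumes "x \<in> Zq q" "y \<in> Zq q" shows "x - y \<in> Zq q"
proof -
  obtain p r where "x = poly (map_poly of_int p) q" "y = poly (map_poly of_int r) q"
    using assms unfolding Zq_def by auto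
  then have "x - y = poly (map_poly of_int (p - r)) q" by (simp add: map_poly_of_int_diff)
  then show ?thesis unfolding Zq_def by blast
qed

lemma Zq_of_int: "of_int a \<in> Zq q"
  unfolding Zq_def by (auto intro!: exI[of _ "[:a:]"] simp: map_poly_pCons)

lemma Zq_zero: "0 \<in> Zq q"
  using Zq_of_int[of 0] by simp

lemma Zq_one: "1 \<in> Zq q"
  using Zq_of_int[of 1] by simp

lemma Zq_mult_q: assumes "x \<in> Zq q" shows "q * x \<in> Zq q"
proof -
  obtain p where "x = poly (map_poly of_int p) q" using assms unfolding Zq_def by auto
  then have "q * x = poly (map_poly of_int (pCons 0 p)) q" by (simp add: map_poly_pCons)
  then show ?thesis unfolding Zq_def by blast
qed

lemma Zq_q: "q \<in> Zq q"
  using Zq_mult_q[OF Zq_one] by simp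

lemma Zq_mult_of_int: assumes "x \<in> Zq q" shows "of_int a * x \<in> Zq q"
proof -
  obtain p where "x = poly (map_poly of_int p) q" using assms unfolding Zq_def by auto
  then have "of_int a * x = poly (map_poly of_int (Polynomial.smult a p)) q"
    by (simp add: map_poly_smult)
  then show ?thesis unfolding Zq_def by blast
qed

lemma Zq_mult: assumes "x \<in> Zq q" "y \<in> Zq q" shows "x * y \<in> Zq q"
proof -
  have "poly (map_poly of_int p) q * y \<in> Zq q" for p
  proof (induction p)
    case (pCons a p)
    have "poly (map_poly of_int (pCons a p)) q * y = of_int a * y + q * (poly (map_poly of_int p) q * y)"
      by (simp add: map_poly_pCons algebra_simps)
    then show ?case using pCons assms(2) by (simp add: Zq_add Zq_mult_of_int Zq_mult_q)
  qed (simp add: Zq_zero)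
  then show ?thesis using assms(1) unfolding Zq_def by auto
qed

lemma Zq_sum: "(\<And>i. i \<in> A \<Longrightarrow> f i \<in> Zq q) \<Longrightarrow> sum f A \<in> Zq q"
  by (induction A rule: infinite_finite_induct) (auto simp: Zq_zero Zq_add)

lemma Zq_power: "x \<in> Zq q \<Longrightarrow> x ^ n \<in> Zq q"
  by (induction n) (auto simp: Zq_one Zq_mult)

lemma qnum_in_Zq: "qnum q k \<in> Zq q"
  unfolding qnum_def by (intro Zq_sum Zq_power Zq_q)

lemma qnum_add: "qnum q (a + b) = qnum q a + q ^ a * qnum q b"
  unfolding qnum_def by (induction b) (auto simp: algebra_simps power_add)

lemma qnum_Suc: "qnum q (Suc j) = 1 + q * qnum q j"
  using qnum_add[of q 1 j] by (simp add: qnum_def)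

lemma qnum_mult: "qnum q (a * b) = qnum q a * qnum (q ^ a) b"
proof (induction b)
  case (Suc b)
  have "qnum q (a * Suc b) = qnum q (a * b) + q ^ (a * b) * qnum q a"
    using qnum_add[of q "a * b" a] by (simp add: algebra_simps)
  then show ?case using Suc by (simp add: qnum_def algebra_simps power_mult)
qed (simp add: qnum_def)

lemma qnum_root_of_unity: assumes "q ^ N = 1" "q \<noteq> 1" shows "qnum q N = 0"
proof -
  have "(1 - q) * qnum q N = 1 - q ^ N"
    unfolding qnum_def
  proof (induction N)
    case (Suc n)
    have "(1 - q) * (\<Sum>i<Suc n. q ^ i) = (1 - q) * (\<Sum>i<n. q ^ i) + (1 - q) * q ^ n"
      by (simp add: distrib_left)
    also have "\<dots> = 1 - q ^ Suc n" using Suc by (simp add: algebra_simps)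
    finally show ?case .
  qed simp
  then show ?thesis using assms by simp
qed

lemma qnum_mod: assumes "q ^ N = 1" "q \<noteq> 1" shows "qnum q a = qnum q (a mod N)"
proof -
  have "qnum q (a mod N + N * k) = qnum q (a mod N)" for k
  proof (induction k)
    case (Suc k)
    have "qnum q (a mod N + N * Suc k) = qnum q (a mod N + N * k + N)" by (simp add: algebra_simps)
    also have "\<dots> = qnum q (a mod N + N * k)"
      by (simp only: qnum_add qnum_root_of_unity[OF assms]) simp
    finally show ?case using Suc by simp
  qed simp
  from this[of "a div N"] show ?thesis by simp
qed

text \<open>If \<open>j j' \<equiv> 1 (mod N)\<close> then \<open>[j]\<^sub>q \<cdot> [j']\<^bsub>q\<^sup>j\<^esub> = [j j']\<^sub>q = [1]\<^sub>q = 1\<close>.\<close>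
lemma qnum_invertible:
  assumes "prime N" "q ^ N = 1" "q \<noteq> 1" "1 \<le> j" "j < N"
  shows "\<exists>u\<in>Zq q. qnum q j * u = 1"
proof -
  have "coprime j N"
    using assms by (metis coprime_commute nat_dvd_not_less prime_imp_coprime_nat
        zero_less_iff_neq_zero not_one_le_zero)
  then obtain j' y where "j * j' = N * y + 1"
    using bezout_nat[of j N] assms(4) by auto
  then have "(j * j') mod N = (1 + N * y) mod N" by simp
  also have "\<dots> = 1 mod N" by (metis mod_mult_self2)
  finally have j': "(j * j') mod N = 1"
    using prime_gt_1_nat[OF assms(1)] by simp
  have "qnum q j * qnum (q ^ j) j' = qnum q (j * j')" by (simp add: qnum_mult)
  also have "\<dots> = qnum q ((j * j') mod N)" by (rule qnum_mod[OF assms(2,3)])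
  finally have "qnum q j * qnum (q ^ j) j' = 1" by (simp add: j' qnum_def)
  moreover have "qnum (q ^ j) j' \<in> Zq q"
    unfolding qnum_def by (intro Zq_sum Zq_power Zq_q)
  ultimately show ?thesis by blast
qed

lemma prod_invertible_Zq:
  assumes "\<And>i. i \<in> A \<Longrightarrow> \<exists>u\<in>Zq q. f i * u = 1"
  shows "\<exists>u\<in>Zq q. prod f A * u = 1"
  using assms
proof (induction A rule: infinite_finite_induct)
  case (insert x F)
  then obtain u v where "u \<in> Zq q" "f x * u = 1" "v \<in> Zq q" "prod f F * v = 1" by blast
  then show ?case using insert by (intro bexI[of _ "u * v"]) (auto simp: Zq_mult algebra_simps)
qed (auto intro: Zq_one)

section \<open>Amplitude homology of graded groups\<close>

lemma dpow_Suc_right: "dpow d (Suc k) n x = dpow d k (n - 1) (d n x)"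
  by (induction k arbitrary: x) (simp_all add: algebra_simps)

lemma dpow_dpow: "dpow d (a + b) n x = dpow d a (n - int b) (dpow d b n x)"
  by (induction a) (simp_all add: algebra_simps)

locale graded_group =
  fixes M :: "int \<Rightarrow> 'v::ab_group_add set" and d :: "int \<Rightarrow> 'v \<Rightarrow> 'v"
  assumes zero_mem: "0 \<in> M n"
    and diff_mem: "x \<in> M n \<Longrightarrow> y \<in> M n \<Longrightarrow> x - y \<in> M n"
    and d_mem: "x \<in> M n \<Longrightarrow> d n x \<in> M (n - 1)"
    and d_diff: "x \<in> M n \<Longrightarrow> y \<in> M n \<Longrightarrow> d n (x - y) = d n x - d n y"
begin

lemma dpow_mem: "x \<in> M n \<Longrightarrow> dpow d k n x \<in> M (n - int k)"
  by (induction k) (auto simp: algebra_simps dest: d_mem)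

lemma dpow_diff: "x \<in> M n \<Longrightarrow> y \<in> M n \<Longrightarrow> dpow d k n (x - y) = dpow d k n x - dpow d k n y"
  by (induction k) (simp_all add: d_diff dpow_mem)

lemma dpow_zero: "dpow d k n 0 = 0"
  using dpow_diff[OF zero_mem zero_mem, where n=n and k=k] by simp

definition dpow_range :: "nat \<Rightarrow> int \<Rightarrow> 'v set" where
  "dpow_range k n = dpow d k (n + int k) ` M (n + int k)"

lemma amp_im_eq_dpow_range: "amp_im M d N m n = dpow_range (N - m) n"
  by (simp add: amp_im_def dpow_range_def)

lemma dpow_range_zero: "0 \<in> dpow_range k n"
  unfolding dpow_range_def using dpow_zero zero_mem by (metis image_eqI)

lemma dpow_range_diff: "x \<in> dpow_range k n \<Longrightarrow> y \<in> dpow_range k n \<Longrightarrow> x - y \<in> dpow_range k n"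
  unfolding dpow_range_def by (auto simp flip: dpow_diff intro!: image_eqI diff_mem)

lemma dpow_range_uminus: "x \<in> dpow_range k n \<Longrightarrow> - x \<in> dpow_range k n"
  using dpow_range_diff[OF dpow_range_zero] by fastforce

lemma dpow_range_add: "x \<in> dpow_range k n \<Longrightarrow> y \<in> dpow_range k n \<Longrightarrow> x + y \<in> dpow_range k n"
  using dpow_range_diff[of x k n "- y"] dpow_range_uminus by fastforce

lemma dpow_range_antimono:
  assumes "k \<le> l" shows "dpow_range l n \<subseteq> dpow_range k n"
proof
  fix x assume "x \<in> dpow_range l n"
  then obtain w where w: "w \<in> M (n + int l)" "x = dpow d l (n + int l) w"
    unfolding dpow_range_def by blast
  have l: "l = k + (l - k)" and idx: "n + int l - int (l - k) = n + int k" using assms by auto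
  have "x = dpow d k (n + int k) (dpow d (l - k) (n + int l) w)"
    using w(2) dpow_dpow[of d k "l - k" "n + int l" w] by (simp only: l[symmetric] idx)
  moreover have "dpow d (l - k) (n + int l) w \<in> M (n + int k)"
    using dpow_mem[OF w(1), of "l - k"] by (simp only: idx)
  ultimately show "x \<in> dpow_range k n" unfolding dpow_range_def by blast
qed

lemma amp_ker_diff: "x \<in> amp_ker M d m n \<Longrightarrow> y \<in> amp_ker M d m n \<Longrightarrow> x - y \<in> amp_ker M d m n"
  unfolding amp_ker_def by (auto simp: dpow_diff diff_mem)

lemma amp_ker_zero: "0 \<in> amp_ker M d m n"
  unfolding amp_ker_def by (auto simp: dpow_zero zero_mem)

lemma equiv_amp_rel: "equiv (amp_ker M d m n) (amp_rel M d N m n)"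
proof (rule equivI)
  show "refl_on (amp_ker M d m n) (amp_rel M d N m n)"
    unfolding refl_on_def amp_rel_def amp_im_eq_dpow_range using dpow_range_zero by auto
  show "amp_rel M d N m n \<subseteq> amp_ker M d m n \<times> amp_ker M d m n"
    unfolding amp_rel_def by auto
  show "sym (amp_rel M d N m n)"
    unfolding sym_def amp_rel_def amp_im_eq_dpow_range using dpow_range_uminus by fastforce
  show "trans (amp_rel M d N m n)"
    unfolding trans_def amp_rel_def amp_im_eq_dpow_range using dpow_range_add by fastforce
qed

end

locale graded_map = src: graded_group M d + tgt: graded_group M' d'
  for M :: "int \<Rightarrow> 'v::ab_group_add set" and d
    and M' :: "int \<Rightarrow> 'w::ab_group_add set" and d' +
  fixes f :: "int \<Rightarrow> 'v \<Rightarrow> 'w"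
  assumes f_mem: "x \<in> M n \<Longrightarrow> f n x \<in> M' n"
    and f_diff: "x \<in> M n \<Longrightarrow> y \<in> M n \<Longrightarrow> f n (x - y) = f n x - f n y"
    and f_d: "x \<in> M n \<Longrightarrow> f (n - 1) (d n x) = d' n (f n x)"
begin

lemma f_zero: "f n 0 = 0"
  using f_diff[OF src.zero_mem src.zero_mem, of n] by simp

lemma f_dpow: "x \<in> M n \<Longrightarrow> f (n - int k) (dpow d k n x) = dpow d' k n (f n x)"
proof (induction k)
  case (Suc k)
  have "f (n - int (Suc k)) (dpow d (Suc k) n x) = f (n - int k - 1) (d (n - int k) (dpow d k n x))"
    by (simp add: algebra_simps)
  also have "\<dots> = d' (n - int k) (f (n - int k) (dpow d k n x))"
    by (rule f_d[OF src.dpow_mem[OF Suc.prems]])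
  finally show ?case using Suc by simp
qed simp

lemma amp_ker_map: "x \<in> amp_ker M d m n \<Longrightarrow> f n x \<in> amp_ker M' d' m n"
  unfolding amp_ker_def using f_mem f_dpow[of x n m] by (auto simp: f_zero)

lemma amp_im_map: "x \<in> amp_im M d N m n \<Longrightarrow> f n x \<in> amp_im M' d' N m n"
  unfolding amp_im_def by (auto intro!: image_eqI f_mem simp flip: f_dpow)

lemma amp_rel_map: "(x, y) \<in> amp_rel M d N m n \<Longrightarrow> (f n x, f n y) \<in> amp_rel M' d' N m n"
  unfolding amp_rel_def using amp_ker_map amp_im_map by (auto simp: amp_ker_def simp flip: f_diff)

lemma amp_induced_class:
  assumes x: "x \<in> amp_ker M d m n"
  shows "amp_induced f M' d' N m n (amp_rel M d N m n `` {x}) = amp_rel M' d' N m n `` {f n x}"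
proof -
  let ?R' = "amp_rel M' d' N m n" and ?R = "amp_rel M d N m n"
  have "(x, x) \<in> ?R" using x by (simp add: amp_rel_def src.amp_im_eq_dpow_range src.dpow_range_zero)
  moreover have "(f n x, z) \<in> ?R'" if "(x, y) \<in> ?R" "(f n y, z) \<in> ?R'" for y z
    using amp_rel_map[OF that(1)] that(2) tgt.equiv_amp_rel by (meson equiv_def transD)
  ultimately show ?thesis unfolding amp_induced_def by blast
qed

theorem bij_betw_amp_induced:
  assumes reflect: "\<And>x. x \<in> amp_ker M d m n \<Longrightarrow> f n x \<in> amp_im M' d' N m n \<Longrightarrow> x \<in> amp_im M d N m n"
    and hit: "\<And>u. u \<in> amp_ker M' d' m n \<Longrightarrow> \<exists>x\<in>amp_ker M d m n. (f n x, u) \<in> amp_rel M' d' N m n"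
  shows "bij_betw (amp_induced f M' d' N m n) (amp_hom M d N m n) (amp_hom M' d' N m n)"
proof -
  let ?K = "amp_ker M d m n" and ?R = "amp_rel M d N m n"
  let ?K' = "amp_ker M' d' m n" and ?R' = "amp_rel M' d' N m n"
  let ?F = "amp_induced f M' d' N m n"
  have inj: "inj_on ?F (?K // ?R)"
  proof (rule inj_onI)
    fix A B assume "A \<in> ?K // ?R" "B \<in> ?K // ?R" and FAB: "?F A = ?F B"
    then obtain x y where x: "x \<in> ?K" "A = ?R `` {x}" and y: "y \<in> ?K" "B = ?R `` {y}"
      by (auto elim!: quotientE)
    have "?R' `` {f n x} = ?R' `` {f n y}" using FAB x y amp_induced_class by simp
    then have "(f n x, f n y) \<in> ?R'"
      using eq_equiv_class_iff[OF tgt.equiv_amp_rel] amp_ker_map x y by blast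
    then have "f n (x - y) \<in> amp_im M' d' N m n"
      using x y by (simp add: amp_rel_def amp_ker_def f_diff)
    then have "(x, y) \<in> ?R"
      using reflect[OF src.amp_ker_diff[OF x(1) y(1)]] x y by (simp add: amp_rel_def)
    then show "A = B" using x y equiv_class_eq[OF src.equiv_amp_rel] by simp
  qed
  have "?F A \<in> ?K' // ?R'" if A: "A \<in> ?K // ?R" for A
  proof -
    obtain x where "x \<in> ?K" "A = ?R `` {x}" using A by (auto elim: quotientE)
    then show ?thesis using amp_induced_class amp_ker_map by (simp add: quotientI)
  qed
  moreover have "B \<in> ?F ` (?K // ?R)" if B: "B \<in> ?K' // ?R'" for B
  proof -
    obtain u where u: "u \<in> ?K'" "B = ?R' `` {u}" using B by (auto elim: quotientE)
    obtain x where x: "x \<in> ?K" "(f n x, u) \<in> ?R'" using hit[OF u(1)] by blast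
    have "B = ?F (?R `` {x})"
      using u x equiv_class_eq[OF tgt.equiv_amp_rel] amp_induced_class[OF x(1)] by metis
    then show ?thesis using x(1) by (auto intro: quotientI)
  qed
  ultimately show ?thesis unfolding bij_betw_def amp_hom_def using inj by blast
qed

end

interpretation zq: graded_group "zq_cx q N" "zq_d q N"
proof
  fix n :: int and x y
  show "0 \<in> zq_cx q N n" by (simp add: zq_cx_def Zq_zero)
  show "x \<in> zq_cx q N n \<Longrightarrow> y \<in> zq_cx q N n \<Longrightarrow> x - y \<in> zq_cx q N n"
    by (auto simp: zq_cx_def Zq_diff)
  show "x \<in> zq_cx q N n \<Longrightarrow> zq_d q N n x \<in> zq_cx q N (n - 1)"
    by (auto simp: zq_cx_def zq_d_def Zq_mult qnum_in_Zq Zq_zero)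
  show "zq_d q N n (x - y) = zq_d q N n x - zq_d q N n y"
    by (auto simp: zq_d_def algebra_simps)
qed

definition zq_d_factor :: "complex \<Rightarrow> nat \<Rightarrow> int \<Rightarrow> complex" where
  "zq_d_factor q N j = (if 1 \<le> j \<and> j \<le> int N - 2 then qnum q (nat j + 1) else 0)"

lemma dpow_zq_d: "dpow (zq_d q N) k n u = (\<Prod>i<k. zq_d_factor q N (n - int i)) * u"
  by (induction k) (simp_all add: zq_d_def zq_d_factor_def algebra_simps)

context
  fixes q :: complex and N :: nat
  assumes N_prime: "prime N" and q_root: "q ^ N = 1" and q_ne_1: "q \<noteq> 1"
begin

lemma dpow_zq_d_invertible:
  assumes "\<And>i. i < k \<Longrightarrow> 1 \<le> n - int i \<and> n - int i \<le> int N - 2"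
  shows "\<exists>w\<in>Zq q. (\<Prod>i<k. zq_d_factor q N (n - int i)) * w = 1"
proof (rule prod_invertible_Zq)
  fix i assume "i \<in> {..<k}"
  then have "1 \<le> n - int i" "nat (n - int i) + 1 < N" using assms[of i] by auto
  then show "\<exists>w\<in>Zq q. zq_d_factor q N (n - int i) * w = 1"
    using qnum_invertible[OF N_prime q_root q_ne_1, of "nat (n - int i) + 1"]
    by (simp add: zq_d_factor_def)
qed

text \<open>Away from degree \<open>m - 1\<close>, either \<open>\<partial>\<^sup>m\<close> or \<open>\<partial>\<^sup>N\<^sup>-\<^sup>m\<close> is multiplication by a unit.\<close>
lemma zq_amp_ker_subset_amp_im:
  assumes m: "1 \<le> m" "m \<le> N - 1" and u: "u \<in> amp_ker (zq_cx q N) (zq_d q N) m n"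
    and nm: "n \<noteq> int m - 1"
  shows "u \<in> amp_im (zq_cx q N) (zq_d q N) N m n"
proof -
  have uC: "u \<in> zq_cx q N n" and du: "(\<Prod>i<m. zq_d_factor q N (n - int i)) * u = 0"
    using u by (auto simp: amp_ker_def dpow_zq_d)
  consider "\<not> (0 \<le> n \<and> n \<le> int N - 2)" | "0 \<le> n \<and> n \<le> int N - 2 \<and> int m \<le> n"
    | "0 \<le> n \<and> n + 2 \<le> int m" using nm m by linarith
  then show ?thesis
  proof cases
    case 1
    then show ?thesis
      using uC zq.dpow_range_zero by (simp add: zq_cx_def zq.amp_im_eq_dpow_range split: if_splits)
  next
    case 2
    obtain w where "(\<Prod>i<m. zq_d_factor q N (n - int i)) * w = 1"
      using dpow_zq_d_invertible[of m n] 2 by force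
    then have "u = 0" using du by (metis mult_zero_left mult.commute mult.left_commute mult_1)
    then show ?thesis by (simp add: zq.amp_im_eq_dpow_range zq.dpow_range_zero)
  next
    case 3
    obtain w where w: "w \<in> Zq q" "(\<Prod>i<N - m. zq_d_factor q N (n + int (N - m) - int i)) * w = 1"
      using dpow_zq_d_invertible[of "N - m" "n + int (N - m)"] 3 m by force
    have "dpow (zq_d q N) (N - m) (n + int (N - m)) (w * u) = u"
      using w by (simp add: dpow_zq_d mult.assoc[symmetric])
    moreover have "w * u \<in> zq_cx q N (n + int (N - m))"
      using 3 m w uC by (auto simp: zq_cx_def Zq_mult split: if_splits)
    ultimately show ?thesis unfolding amp_im_def by (metis image_eqI)
  qed
qed

end

lemma zq_amp_im_boundary:
  assumes "1 \<le> m" "m \<le> N - 1"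
  shows "amp_im (zq_cx q N) (zq_d q N) N m (int m - 1) = {0}"
proof -
  have "int m - 1 + int (N - m) = int N - 1" using assms by auto
  then show ?thesis by (simp add: amp_im_def zq_cx_def zq.dpow_zero)
qed

definition csmul :: "complex \<Rightarrow> ('s \<Rightarrow> complex) \<Rightarrow> 's \<Rightarrow> complex" where
  "csmul a x = (\<lambda>\<sigma>. a * x \<sigma>)"

definition coeff_sum :: "('s \<Rightarrow> complex) \<Rightarrow> complex" where
  "coeff_sum x = (\<Sum>\<sigma>\<in>{\<sigma>. x \<sigma> \<noteq> 0}. x \<sigma>)"

definition index_map :: "nat \<Rightarrow> int \<Rightarrow> ('s \<Rightarrow> complex) \<Rightarrow> complex" where
  "index_map N n x = (if 0 \<le> n \<and> n \<le> int N - 2 then coeff_sum x else 0)"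

lemma eta_eq_index_map: "eta N = index_map N"
  by (intro ext) (simp add: eta_def index_map_def coeff_sum_def)

lemma csmul_zero [simp]: "csmul a 0 = 0"
  by (simp add: csmul_def fun_eq_iff)

lemma csmul_one [simp]: "csmul 1 x = x"
  by (simp add: csmul_def)

lemma csmul_csmul [simp]: "csmul a (csmul b x) = csmul (a * b) x"
  by (simp add: csmul_def mult.assoc)

lemma add_csmul_self: "x + csmul a x = csmul (1 + a) x"
  by (simp add: csmul_def fun_eq_iff algebra_simps)

lemma coeff_sum_superset: "finite S \<Longrightarrow> {\<sigma>. x \<sigma> \<noteq> 0} \<subseteq> S \<Longrightarrow> coeff_sum x = sum x S"
  unfolding coeff_sum_def by (rule sum.mono_neutral_left) auto

lemma coeff_sum_linear:
  assumes "finite {\<sigma>. x \<sigma> \<noteq> 0}" "finite {\<sigma>. y \<sigma> \<noteq> 0}"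
  shows "coeff_sum (\<lambda>\<sigma>. a * x \<sigma> + y \<sigma>) = a * coeff_sum x + coeff_sum y"
proof -
  let ?S = "{\<sigma>. x \<sigma> \<noteq> 0} \<union> {\<sigma>. y \<sigma> \<noteq> 0}"
  have "coeff_sum (\<lambda>\<sigma>. a * x \<sigma> + y \<sigma>) = (\<Sum>\<sigma>\<in>?S. a * x \<sigma> + y \<sigma>)"
    by (rule coeff_sum_superset) (use assms in auto)
  also have "\<dots> = a * sum x ?S + sum y ?S" by (simp add: sum.distrib sum_distrib_left)
  also have "sum x ?S = coeff_sum x" by (rule coeff_sum_superset[symmetric]) (use assms in auto)
  also have "sum y ?S = coeff_sum y" by (rule coeff_sum_superset[symmetric]) (use assms in auto)
  finally show ?thesis .
qed

lemma coeff_sum_diff: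
  assumes "finite {\<sigma>. x \<sigma> \<noteq> 0}" "finite {\<sigma>. y \<sigma> \<noteq> 0}"
  shows "coeff_sum (x - y) = coeff_sum x - coeff_sum y"
  using coeff_sum_linear[OF assms(1), of "- y" 1] assms(2)
  by (simp add: fun_diff_def coeff_sum_def sum_negf)

lemma coeff_sum_csmul:
  assumes "finite {\<sigma>. x \<sigma> \<noteq> 0}"
  shows "coeff_sum (csmul a x) = a * coeff_sum x"
  using coeff_sum_linear[OF assms, of "\<lambda>_. 0" a] by (simp add: csmul_def coeff_sum_def)

section \<open>Complexes with a q-contracting homotopy\<close>

primrec hpow :: "(int \<Rightarrow> 'v \<Rightarrow> 'v) \<Rightarrow> nat \<Rightarrow> int \<Rightarrow> 'v \<Rightarrow> 'v" where
  "hpow h 0 n y = y"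
| "hpow h (Suc j) n y = h (n + int j) (hpow h j n y)"

definition qfact :: "complex \<Rightarrow> nat \<Rightarrow> complex" where
  "qfact q j = (\<Prod>i<j. qnum q (Suc i))"

text \<open>\<open>d_h\<close> is the q-analogue \<open>\<partial>h - q h\<partial> = id\<close> of the cone identity; in degree 0 it holds
  only on chains of augmentation 0. The chains \<open>cst n\<close> stand for the constant simplices.\<close>
locale qcontractible_complex = graded_group C d
  for C :: "int \<Rightarrow> ('s \<Rightarrow> complex) set" and d +
  fixes h :: "int \<Rightarrow> ('s \<Rightarrow> complex) \<Rightarrow> 's \<Rightarrow> complex" and cst :: "int \<Rightarrow> 's \<Rightarrow> complex"
    and q :: complex and N :: nat
  assumes finite_support: "x \<in> C n \<Longrightarrow> finite {\<sigma>. x \<sigma> \<noteq> 0}"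
    and values_Zq: "x \<in> C n \<Longrightarrow> x \<sigma> \<in> Zq q"
    and csmul_mem: "a \<in> Zq q \<Longrightarrow> x \<in> C n \<Longrightarrow> csmul a x \<in> C n"
    and negative_degree: "n < 0 \<Longrightarrow> x \<in> C n \<Longrightarrow> x = 0"
    and d_csmul: "a \<in> Zq q \<Longrightarrow> x \<in> C n \<Longrightarrow> d n (csmul a x) = csmul a (d n x)"
    and h_mem: "x \<in> C n \<Longrightarrow> h n x \<in> C (n + 1)"
    and h_diff: "x \<in> C n \<Longrightarrow> y \<in> C n \<Longrightarrow> h n (x - y) = h n x - h n y"
    and h_csmul: "a \<in> Zq q \<Longrightarrow> x \<in> C n \<Longrightarrow> h n (csmul a x) = csmul a (h n x)"
    and coeff_sum_d: "1 \<le> n \<Longrightarrow> x \<in> C n \<Longrightarrow> coeff_sum (d n x) = qnum q (nat n + 1) * coeff_sum x"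
    and d_h: "x \<in> C n \<Longrightarrow> 0 \<le> n \<Longrightarrow> (n = 0 \<Longrightarrow> coeff_sum x = 0) \<Longrightarrow>
                d (n + 1) (h n x) = x + csmul q (h (n - 1) (d n x))"
    and cst_mem: "0 \<le> n \<Longrightarrow> cst n \<in> C n"
    and coeff_sum_cst: "0 \<le> n \<Longrightarrow> coeff_sum (cst n) = 1"
    and d_cst: "1 \<le> n \<Longrightarrow> d n (cst n) = csmul (qnum q (nat n + 1)) (cst (n - 1))"
    and N_prime: "prime N" and N_ge_3: "3 \<le> N" and q_root: "q ^ N = 1" and q_ne_1: "q \<noteq> 1"
begin

lemma h_zero: "h n 0 = 0"
  using h_diff[OF zero_mem zero_mem, of n] by simp

lemma hpow_mem: "y \<in> C n \<Longrightarrow> hpow h j n y \<in> C (n + int j)"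
  by (induction j) (auto dest: h_mem simp: algebra_simps)

lemma dpow_csmul: "a \<in> Zq q \<Longrightarrow> x \<in> C n \<Longrightarrow> dpow d k n (csmul a x) = csmul a (dpow d k n x)"
  by (induction k) (auto simp: d_csmul dpow_mem)

lemma coeff_sum_in_Zq: "x \<in> C n \<Longrightarrow> coeff_sum x \<in> Zq q"
  unfolding coeff_sum_def by (intro Zq_sum values_Zq)

lemma qnum_invertible': "1 \<le> j \<Longrightarrow> j < N \<Longrightarrow> \<exists>u\<in>Zq q. qnum q j * u = 1"
  using qnum_invertible[OF N_prime q_root q_ne_1] by blast

lemma qfact_invertible: "j < N \<Longrightarrow> \<exists>u\<in>Zq q. qfact q j * u = 1"
  unfolding qfact_def by (rule prod_invertible_Zq) (auto intro!: qnum_invertible')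

context
  fixes y n
  assumes y: "y \<in> C n" "0 \<le> n" "d n y = 0" "n = 0 \<Longrightarrow> coeff_sum y = 0"
begin

lemma d_hpow_Suc:
  "d (n + int (Suc j)) (hpow h (Suc j) n y) = csmul (qnum q (Suc j)) (hpow h j n y)"
proof (induction j)
  case 0
  have "d (n + 1) (h n y) = y" using d_h[OF y(1,2,4)] y(3) h_zero by simp
  then show ?case by (simp add: qnum_def)
next
  case (Suc j)
  let ?z = "hpow h (Suc j) n y"
  have "d (n + int (Suc j) + 1) (h (n + int (Suc j)) ?z)
      = ?z + csmul q (h (n + int (Suc j) - 1) (d (n + int (Suc j)) ?z))"
    by (rule d_h[OF hpow_mem[OF y(1)]]) (use y(2) in auto)
  also have "h (n + int (Suc j) - 1) (d (n + int (Suc j)) ?z) = csmul (qnum q (Suc j)) ?z"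
    using Suc by (simp add: h_csmul qnum_in_Zq hpow_mem[OF y(1)])
  finally show ?case
    by (simp add: add_csmul_self qnum_Suc[of q "Suc j"] algebra_simps)
qed

lemma dpow_hpow: "dpow d j (n + int j) (hpow h j n y) = csmul (qfact q j) y"
proof (induction j)
  case (Suc j)
  have "dpow d (Suc j) (n + int (Suc j)) (hpow h (Suc j) n y)
      = dpow d j (n + int j) (d (n + int (Suc j)) (hpow h (Suc j) n y))"
    by (simp only: dpow_Suc_right) (simp add: algebra_simps)
  also have "\<dots> = dpow d j (n + int j) (csmul (qnum q (Suc j)) (hpow h j n y))"
    by (simp only: d_hpow_Suc)
  also have "\<dots> = csmul (qnum q (Suc j)) (csmul (qfact q j) y)"
    by (simp add: dpow_csmul qnum_in_Zq hpow_mem[OF y(1)] Suc)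
  finally show ?case by (simp add: qfact_def algebra_simps)
qed (simp add: qfact_def csmul_def)

lemma cycle_in_dpow_range: "y \<in> dpow_range (N - 1) n"
proof -
  obtain u where u: "u \<in> Zq q" "qfact q (N - 1) * u = 1"
    using qfact_invertible[of "N - 1"] N_ge_3 by auto
  have "dpow d (N - 1) (n + int (N - 1)) (csmul u (hpow h (N - 1) n y)) = y"
    using u by (simp add: dpow_csmul hpow_mem[OF y(1)] dpow_hpow algebra_simps)
  moreover have "csmul u (hpow h (N - 1) n y) \<in> C (n + int (N - 1))"
    by (intro csmul_mem u hpow_mem y)
  ultimately show ?thesis unfolding dpow_range_def by (metis image_eqI)
qed

end

lemma dpow_range_of_d:
  assumes k: "k \<le> N - 1" and n: "1 \<le> n" and x: "x \<in> C n"
    and dx: "d n x \<in> dpow_range (Suc k) (n - 1)"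
  shows "x \<in> dpow_range k n"
proof -
  obtain w where w: "w \<in> C (n + int k)" "d n x = d n (dpow d k (n + int k) w)"
    using dx unfolding dpow_range_def by (auto simp: algebra_simps)
  have dw: "dpow d k (n + int k) w \<in> dpow_range k n" unfolding dpow_range_def using w(1) by blast
  then have dwC: "dpow d k (n + int k) w \<in> C n" using dpow_mem[OF w(1), of k] by simp
  have "x - dpow d k (n + int k) w \<in> dpow_range (N - 1) n"
    using n w(2) by (intro cycle_in_dpow_range diff_mem x dwC) (auto simp: d_diff[OF x dwC])
  then have "x - dpow d k (n + int k) w \<in> dpow_range k n"
    using dpow_range_antimono[OF k] by blast
  from dpow_range_add[OF this dw] show ?thesis by simp
qed

lemma amp_ker_in_dpow_range:
  "1 \<le> m \<Longrightarrow> m \<le> N - 1 \<Longrightarrow> int m - 1 \<le> n \<Longrightarrow> x \<in> C n \<Longrightarrow> dpow d m n x = 0 \<Longrightarrow>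
    (n = int m - 1 \<Longrightarrow> coeff_sum x = 0) \<Longrightarrow> x \<in> dpow_range (N - m) n"
proof (induction m arbitrary: n x)
  case (Suc m)
  show ?case
  proof (cases "m = 0")
    case True
    have "d n x = 0" using Suc.prems(5) True by (simp add: zero_fun_def)
    then show ?thesis using Suc.prems True cycle_in_dpow_range[of x n] by simp
  next
    case False
    have hyps: "1 \<le> m" "m \<le> N - 1" "int m - 1 \<le> n - 1" "1 \<le> n"
      using Suc.prems(2,3) False by auto
    have "dpow d m (n - 1) (d n x) = 0"
      using Suc.prems(5) by (simp only: dpow_Suc_right)
    moreover have "coeff_sum (d n x) = 0" if "n - 1 = int m - 1"
      using that coeff_sum_d[OF hyps(4) Suc.prems(4)] Suc.prems(6) by simp
    ultimately have "d n x \<in> dpow_range (N - m) (n - 1)"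
      by (rule Suc.IH[OF hyps(1-3) d_mem[OF Suc.prems(4)]])
    moreover have "N - m = Suc (N - Suc m)" using Suc.prems(2) by simp
    ultimately have dx: "d n x \<in> dpow_range (Suc (N - Suc m)) (n - 1)" by (simp only:)
    show ?thesis by (rule dpow_range_of_d[OF _ hyps(4) Suc.prems(4) dx]) simp
  qed
qed simp

lemma dpow_cst:
  assumes "0 \<le> n"
  shows "dpow d k (n + int k) (cst (n + int k)) = csmul (\<Prod>i<k. qnum q (nat n + i + 2)) (cst n)"
proof (induction k)
  case (Suc k)
  have "dpow d (Suc k) (n + int (Suc k)) (cst (n + int (Suc k)))
     = dpow d k (n + int k) (d (n + int (Suc k)) (cst (n + int (Suc k))))"
    by (simp only: dpow_Suc_right) (simp add: algebra_simps)
  also have "d (n + int (Suc k)) (cst (n + int (Suc k))) = csmul (qnum q (nat n + k + 2)) (cst (n + int k))"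
    using d_cst[of "n + int (Suc k)"] assms by (simp add: nat_add_distrib)
  finally show ?case
    using assms by (simp add: dpow_csmul qnum_in_Zq cst_mem Suc algebra_simps)
qed (simp add: csmul_def)

lemma csmul_cst_in_dpow_range:
  assumes a: "a \<in> Zq q" and n: "0 \<le> n" "n + int k + 1 < int N"
  shows "csmul a (cst n) \<in> dpow_range k n"
proof -
  obtain u where u: "u \<in> Zq q" "(\<Prod>i<k. qnum q (nat n + i + 2)) * u = 1"
    using prod_invertible_Zq[of "{..<k}" q "\<lambda>i. qnum q (nat n + i + 2)"] qnum_invertible' n by force
  have "dpow d k (n + int k) (csmul (a * u) (cst (n + int k))) = csmul a (cst n)"
    using a u n by (simp add: dpow_csmul Zq_mult cst_mem dpow_cst mult.assoc mult.commute[of u])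
  moreover have "csmul (a * u) (cst (n + int k)) \<in> C (n + int k)"
    using a u n by (intro csmul_mem Zq_mult cst_mem) auto
  ultimately show ?thesis unfolding dpow_range_def by (metis image_eqI)
qed

text \<open>Split off the augmentation along \<open>cst n\<close> and treat the rest at amplitude \<open>n + 1\<close>.\<close>
lemma chain_in_dpow_range:
  assumes n: "0 \<le> n" "n + 2 \<le> int m" and m: "m \<le> N - 1" and x: "x \<in> C n"
  shows "x \<in> dpow_range (N - m) n"
proof -
  define c where "c = csmul (coeff_sum x) (cst n)"
  have cC: "c \<in> C n" unfolding c_def by (intro csmul_mem coeff_sum_in_Zq[OF x] cst_mem n)
  have "coeff_sum (x - c) = coeff_sum x - coeff_sum c"
    by (rule coeff_sum_diff[OF finite_support[OF x] finite_support[OF cC]])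
  also have "coeff_sum c = coeff_sum x"
    unfolding c_def using coeff_sum_csmul[OF finite_support[OF cst_mem[OF n(1)]]] coeff_sum_cst[OF n(1)]
    by simp
  finally have "coeff_sum (x - c) = 0" by (simp only: diff_self)
  moreover have "dpow d (nat n + 1) n (x - c) = 0"
    using negative_degree[OF _ dpow_mem[OF diff_mem[OF x cC]], of "nat n + 1"] n by simp
  ultimately have "x - c \<in> dpow_range (N - (nat n + 1)) n"
    using n m by (intro amp_ker_in_dpow_range diff_mem x cC) auto
  moreover have "N - m \<le> N - (nat n + 1)"
    using n by (intro diff_le_mono2) linarith
  ultimately have "x - c \<in> dpow_range (N - m) n"
    using dpow_range_antimono by blast
  moreover have "c \<in> dpow_range (N - m) n"
    unfolding c_def using n m by (intro csmul_cst_in_dpow_range coeff_sum_in_Zq[OF x]) auto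
  ultimately show ?thesis using dpow_range_add by fastforce
qed

text \<open>The truncation above degree \<open>N - 2\<close> is compatible with \<open>\<partial>\<close> because \<open>[N]\<^sub>q = 0\<close>.\<close>
lemma index_map_d:
  assumes x: "x \<in> C n"
  shows "index_map N (n - 1) (d n x) = zq_d q N n (index_map N n x)"
proof -
  consider "n \<le> 0" | "1 \<le> n \<and> n \<le> int N - 2" | "n = int N - 1" | "int N \<le> n" by linarith
  then show ?thesis
  proof cases
    case 1
    then have "d n x = 0" using negative_degree[OF _ d_mem[OF x]] by simp
    then show ?thesis using 1 by (simp add: index_map_def zq_d_def coeff_sum_def)
  next
    case 2 then show ?thesis using coeff_sum_d[OF _ x] by (simp add: index_map_def zq_d_def)
  next
    case 3
    then have "nat n + 1 = N" using N_ge_3 by auto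
    then show ?thesis using coeff_sum_d[OF _ x] 3 N_ge_3 qnum_root_of_unity[OF q_root q_ne_1]
      by (simp add: index_map_def zq_d_def)
  next
    case 4 then show ?thesis by (simp add: index_map_def zq_d_def)
  qed
qed

sublocale index: graded_map C d "zq_cx q N" "zq_d q N" "index_map N"
proof
  fix n x y
  show "x \<in> C n \<Longrightarrow> index_map N n x \<in> zq_cx q N n"
    by (auto simp: index_map_def zq_cx_def coeff_sum_in_Zq)
  show "x \<in> C n \<Longrightarrow> y \<in> C n \<Longrightarrow> index_map N n (x - y) = index_map N n x - index_map N n y"
    by (simp add: index_map_def coeff_sum_diff finite_support)
  show "x \<in> C n \<Longrightarrow> index_map N (n - 1) (d n x) = zq_d q N n (index_map N n x)"
    by (rule index_map_d)
qed

lemma index_map_reflects_amp_im: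
  assumes m: "1 \<le> m" "m \<le> N - 1" and x: "x \<in> amp_ker C d m n"
    and e: "index_map N n x \<in> amp_im (zq_cx q N) (zq_d q N) N m n"
  shows "x \<in> amp_im C d N m n"
proof -
  have xC: "x \<in> C n" and dx: "dpow d m n x = 0" using x by (auto simp: amp_ker_def)
  consider "n < 0" | "int m - 1 \<le> n" | "0 \<le> n \<and> n + 2 \<le> int m" by linarith
  then show ?thesis
  proof cases
    case 1
    then show ?thesis using negative_degree[OF 1 xC] by (simp add: amp_im_eq_dpow_range dpow_range_zero)
  next
    case 2
    have "1 + int m \<le> int N" using m by linarith
    then have "coeff_sum x = 0" if "n = int m - 1"
      using that e zq_amp_im_boundary[OF m] m by (simp add: index_map_def)
    then show ?thesis using amp_ker_in_dpow_range[OF m 2 xC dx] by (simp add: amp_im_eq_dpow_range)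
  next
    case 3
    then show ?thesis using chain_in_dpow_range[of n m x] m xC by (simp add: amp_im_eq_dpow_range)
  qed
qed

lemma index_map_hits_amp_hom:
  assumes m: "1 \<le> m" "m \<le> N - 1" and u: "u \<in> amp_ker (zq_cx q N) (zq_d q N) m n"
  shows "\<exists>x\<in>amp_ker C d m n. (index_map N n x, u) \<in> amp_rel (zq_cx q N) (zq_d q N) N m n"
proof (cases "n = int m - 1")
  case True
  have n: "0 \<le> n" "n \<le> int N - 2" using True m by auto
  have uZ: "u \<in> Zq q" using u n by (simp add: amp_ker_def zq_cx_def)
  define x where "x = csmul u (cst n)"
  have xC: "x \<in> C n" unfolding x_def by (intro csmul_mem uZ cst_mem n)
  have "dpow d m n x = 0" using negative_degree[OF _ dpow_mem[OF xC, of m]] True by simp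
  then have "x \<in> amp_ker C d m n" using xC by (simp add: amp_ker_def)
  moreover have "index_map N n x = u"
    using n coeff_sum_csmul[OF finite_support[OF cst_mem[OF n(1)]]] coeff_sum_cst[OF n(1)]
    by (simp add: index_map_def x_def)
  moreover have "(u, u) \<in> amp_rel (zq_cx q N) (zq_d q N) N m n"
    using u by (simp add: amp_rel_def zq.amp_im_eq_dpow_range zq.dpow_range_zero)
  ultimately show ?thesis by auto
next
  case False
  have "- u \<in> amp_im (zq_cx q N) (zq_d q N) N m n"
    using zq_amp_ker_subset_amp_im[OF N_prime q_root q_ne_1 m u False]
    by (simp add: zq.amp_im_eq_dpow_range zq.dpow_range_uminus)
  then have "(0, u) \<in> amp_rel (zq_cx q N) (zq_d q N) N m n"
    using u zq.amp_ker_zero by (simp add: amp_rel_def)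
  then show ?thesis using amp_ker_zero index.f_zero by metis
qed

theorem bij_betw_amp_induced_index_map:
  assumes "1 \<le> m" "m \<le> N - 1"
  shows "bij_betw (amp_induced (index_map N) (zq_cx q N) (zq_d q N) N m n)
       (amp_hom C d N m n) (amp_hom (zq_cx q N) (zq_d q N) N m n)"
  using assms by (intro index.bij_betw_amp_induced index_map_reflects_amp_im index_map_hits_amp_hom)

end

section \<open>The cone on a singular simplex\<close>

lemma eventually_atin_topspace: "eventually (\<lambda>y. y \<in> topspace T) (atin T x)"
  unfolding eventually_atin by (metis Diff_iff openin_topspace)

lemma atin_le_atin_within_open:
  assumes "openin T U" "x \<in> U"
  shows "atin T x \<le> atin_within T x U"
proof (rule filter_leI)
  fix P assume "eventually P (atin_within T x U)"
  then have "x \<notin> topspace T \<or> (\<exists>V. openin T V \<and> x \<in> V \<and> (\<forall>y\<in>V. y \<in> U \<and> y \<noteq> x \<longrightarrow> P y))"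
    by (simp add: eventually_atin_within)
  then show "eventually P (atin T x)"
  proof
    assume "x \<notin> topspace T" then show ?thesis by (simp add: eventually_atin)
  next
    assume "\<exists>V. openin T V \<and> x \<in> V \<and> (\<forall>y\<in>V. y \<in> U \<and> y \<noteq> x \<longrightarrow> P y)"
    then obtain V where V: "openin T V" "x \<in> V" "\<forall>y\<in>V. y \<in> U \<and> y \<noteq> x \<longrightarrow> P y" by blast
    have "openin T (V \<inter> U)" using V(1) assms(1) by auto
    moreover have "\<forall>y\<in>(V \<inter> U) - {x}. P y" using V(3) by auto
    ultimately show ?thesis unfolding eventually_atin using V(2) assms(2) by blast
  qed
qed

text \<open>At a zero of \<open>a\<close> the product tends to 0 because \<open>w\<close> is bounded.\<close>
lemma continuous_map_scaleR_vanishing: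
  fixes w :: "'a \<Rightarrow> 'b::real_normed_vector"
  assumes a: "continuous_map T euclideanreal a"
    and B: "\<And>x. x \<in> topspace T \<Longrightarrow> norm (w x) \<le> B"
    and w: "continuous_map (subtopology T {x \<in> topspace T. a x \<noteq> 0}) euclidean w"
  shows "continuous_map T euclidean (\<lambda>x. a x *\<^sub>R w x)"
  unfolding continuous_map_atin limitin_canonical_iff
proof
  fix x assume x: "x \<in> topspace T"
  have alim: "(a \<longlongrightarrow> a x) (atin T x)"
    using a x unfolding continuous_map_atin limitin_canonical_iff by blast
  show "((\<lambda>x. a x *\<^sub>R w x) \<longlongrightarrow> a x *\<^sub>R w x) (atin T x)"
  proof (cases "a x = 0")
    case True
    have "\<forall>\<^sub>F y in atin T x. norm (a y *\<^sub>R w y) \<le> \<bar>a y\<bar> * B"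
      using eventually_atin_topspace[of T x]
      by eventually_elim (auto intro: mult_left_mono B)
    moreover have "((\<lambda>y. \<bar>a y\<bar> * B) \<longlongrightarrow> 0) (atin T x)"
      using alim True by (intro tendsto_mult_left_zero tendsto_rabs_zero) simp
    ultimately have "((\<lambda>y. a y *\<^sub>R w y) \<longlongrightarrow> 0) (atin T x)"
      by (rule Lim_null_comparison)
    then show ?thesis using True by simp
  next
    case False
    let ?U = "{x \<in> topspace T. a x \<noteq> 0}"
    have "openin T {x \<in> topspace T. a x \<in> - {0}}"
      by (rule openin_continuous_map_preimage[OF a]) (simp add: open_Compl)
    then have U: "openin T ?U" by simp
    have xU: "x \<in> ?U" using False x by auto
    have "limitin euclidean w (w x) (atin_within T x ?U)"
      by (rule limit_continuous_map_within[OF w]) (use xU in auto)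
    then have "(w \<longlongrightarrow> w x) (atin T x)"
      using tendsto_mono[OF atin_le_atin_within_open[OF U xU]] by (simp add: limitin_canonical_iff)
    then show ?thesis using alim by (intro tendsto_scaleR)
  qed
qed

lemma continuous_map_simplex_coordinate:
  "continuous_map (subtopology (powertop_real UNIV) A) euclideanreal (\<lambda>t. t k)"
  by (rule continuous_map_from_subtopology) (rule continuous_map_product_projection, simp)

definition cone_base :: "(nat \<Rightarrow> real) \<Rightarrow> nat \<Rightarrow> real" where
  "cone_base t = (\<lambda>i. t (Suc i) / (1 - t 0))"

text \<open>The cone with apex \<open>x\<^sub>0\<close> on \<open>\<sigma>\<close> is
  \<open>t \<mapsto> t\<^sub>0 x\<^sub>0 + (1 - t\<^sub>0) \<sigma>((t\<^sub>1, t\<^sub>2, \<dots>)/(1 - t\<^sub>0))\<close>, with the apex value set explicitly at \<open>t\<^sub>0 = 1\<close>, where the division is junk.\<close>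
definition cone_simplex :: "nat \<Rightarrow> 'b::real_vector \<Rightarrow> ((nat \<Rightarrow> real) \<Rightarrow> 'b) \<Rightarrow> (nat \<Rightarrow> real) \<Rightarrow> 'b" where
  "cone_simplex p x0 \<sigma> = restrict
     (\<lambda>t. x0 + (1 - t 0) *\<^sub>R (if t 0 = 1 then 0 else \<sigma> (cone_base t) - x0)) (standard_simplex (Suc p))"

definition const_simplex :: "nat \<Rightarrow> 'b \<Rightarrow> (nat \<Rightarrow> real) \<Rightarrow> 'b" where
  "const_simplex p x0 = restrict (\<lambda>_. x0) (standard_simplex p)"

lemma cone_base_in_standard_simplex:
  assumes t: "t \<in> standard_simplex (Suc p)" and t0: "t 0 \<noteq> 1"
  shows "cone_base t \<in> standard_simplex p"
proof -
  have t01: "\<And>i. 0 \<le> t i \<and> t i \<le> 1" and tz: "\<And>i. i > Suc p \<Longrightarrow> t i = 0"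
    and ts: "(\<Sum>i\<le>Suc p. t i) = 1" using t by (auto simp: standard_simplex_def)
  have pos: "1 - t 0 > 0" using t01[of 0] t0 by auto
  have ssum: "(\<Sum>i\<le>p. t (Suc i)) = 1 - t 0"
    using ts unfolding sum.atMost_Suc_shift by simp
  have le: "t (Suc i) \<le> 1 - t 0" if "i \<le> p" for i
    using member_le_sum[of i "{..p}" "\<lambda>i. t (Suc i)"] that t01 ssum by auto
  show ?thesis unfolding standard_simplex_def cone_base_def
  proof (intro CollectI conjI allI impI)
    fix i
    show "0 \<le> t (Suc i) / (1 - t 0)" using t01 pos by simp
    show "t (Suc i) / (1 - t 0) \<le> 1"
      using le[of i] tz[of "Suc i"] pos by (cases "i \<le> p") auto
  next
    fix i assume "p < i" then show "t (Suc i) / (1 - t 0) = 0" using tz[of "Suc i"] by simp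
  next
    show "(\<Sum>i\<le>p. t (Suc i) / (1 - t 0)) = 1" using ssum pos by (simp flip: sum_divide_distrib)
  qed
qed

lemma continuous_map_cone_base:
  "continuous_map (subtopology (powertop_real UNIV) {t \<in> standard_simplex (Suc p). 1 - t 0 \<noteq> 0})
     (subtopology (powertop_real UNIV) (standard_simplex p)) cone_base"
proof (rule continuous_map_into_subtopology)
  show "continuous_map (subtopology (powertop_real UNIV) {t \<in> standard_simplex (Suc p). 1 - t 0 \<noteq> 0})
      (powertop_real UNIV) cone_base"
    unfolding continuous_map_componentwise_UNIV cone_base_def
    by (auto intro!: continuous_map_real_divide continuous_map_simplex_coordinate continuous_map_diff)
  show "cone_base \<in> topspace (subtopology (powertop_real UNIV) {t \<in> standard_simplex (Suc p). 1 - t 0 \<noteq> 0})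
      \<rightarrow> standard_simplex p"
    by (auto intro!: cone_base_in_standard_simplex)
qed

lemma continuous_map_cone_simplex:
  fixes x0 :: "'b::real_normed_vector"
  assumes \<sigma>: "continuous_map (subtopology (powertop_real UNIV) (standard_simplex p)) euclidean \<sigma>"
  shows "continuous_map (subtopology (powertop_real UNIV) (standard_simplex (Suc p))) euclidean
           (cone_simplex p x0 \<sigma>)"
proof -
  let ?T = "subtopology (powertop_real UNIV) (standard_simplex (Suc p))"
  let ?U = "{t \<in> topspace ?T. 1 - t 0 \<noteq> 0}"
  define W where "W t = (if t 0 = 1 then 0 else \<sigma> (cone_base t) - x0)" for t
  have "compactin euclidean (\<sigma> ` standard_simplex p)"
    by (rule image_compactin[OF _ \<sigma>]) (simp add: compactin_subtopology compactin_standard_simplex)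
  then have "bounded (\<sigma> ` standard_simplex p)" by (simp add: compact_imp_bounded)
  then obtain B where B: "\<And>y. y \<in> standard_simplex p \<Longrightarrow> norm (\<sigma> y) \<le> B"
    by (auto simp: bounded_iff)
  have WB: "norm (W t) \<le> B + norm x0" if "t \<in> topspace ?T" for t
  proof (cases "t 0 = 1")
    case False
    have "norm (\<sigma> (cone_base t)) \<le> B"
      by (rule B, rule cone_base_in_standard_simplex) (use that False in auto)
    then show ?thesis using False norm_triangle_ineq4[of "\<sigma> (cone_base t)" x0] by (simp add: W_def)
  next
    case True
    have "norm (\<sigma> (\<lambda>j. if j = 0 then 1 else 0)) \<le> B" by (rule B) simp
    then have "0 \<le> B" using norm_ge_zero[of "\<sigma> (\<lambda>j. if j = 0 then 1 else 0)"] by linarith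
    then show ?thesis using True by (simp add: W_def)
  qed
  have a: "continuous_map ?T euclideanreal (\<lambda>t. 1 - t 0)"
    by (intro continuous_map_diff continuous_map_const[THEN iffD2] continuous_map_simplex_coordinate) simp
  have "continuous_map (subtopology ?T ?U) (subtopology (powertop_real UNIV) (standard_simplex p)) cone_base"
    using continuous_map_cone_base[of p] by (simp add: subtopology_subtopology Collect_conj_eq Int_commute)
  then have "continuous_map (subtopology ?T ?U) euclidean (\<lambda>t. \<sigma> (cone_base t) - x0)"
    by (intro continuous_map_diff continuous_map_compose[OF _ \<sigma>, unfolded o_def]) simp_all
  then have Wc: "continuous_map (subtopology ?T ?U) euclidean W"
    by (rule continuous_map_eq) (auto simp: W_def)
  have "continuous_map ?T euclidean (\<lambda>t. x0 + (1 - t 0) *\<^sub>R W t)"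
    by (intro continuous_map_add continuous_map_const[THEN iffD2]
        continuous_map_scaleR_vanishing[OF a WB Wc]) simp_all
  then show ?thesis
    unfolding cone_simplex_def by (subst restrict_continuous_map) (auto simp: W_def)
qed

lemma cone_simplex_in_convex:
  assumes \<sigma>: "\<sigma> ` standard_simplex p \<subseteq> S" and x0: "x0 \<in> S" and S: "convex S"
    and t: "t \<in> standard_simplex (Suc p)"
  shows "cone_simplex p x0 \<sigma> t \<in> S"
proof (cases "t 0 = 1")
  case True then show ?thesis using t x0 by (simp add: cone_simplex_def)
next
  case False
  have "0 \<le> t 0" "t 0 \<le> 1" using t by (auto simp: standard_simplex_def)
  moreover have "\<sigma> (cone_base t) \<in> S" using \<sigma> cone_base_in_standard_simplex[OF t False] by auto
  ultimately have "t 0 *\<^sub>R x0 + (1 - t 0) *\<^sub>R \<sigma> (cone_base t) \<in> S"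
    using S x0 by (auto simp: convex_def)
  then show ?thesis using t False by (simp add: cone_simplex_def algebra_simps)
qed

lemma singular_simplex_cone_simplex:
  fixes x0 :: "'b::real_normed_vector"
  assumes "singular_simplex p (subtopology euclidean S) \<sigma>" and "x0 \<in> S" and "convex S"
  shows "singular_simplex (Suc p) (subtopology euclidean S) (cone_simplex p x0 \<sigma>)"
proof -
  have "singular_simplex p euclidean \<sigma>" and \<sigma>S: "\<sigma> ` standard_simplex p \<subseteq> S"
    using assms(1) by (auto simp: singular_simplex_subtopology)
  then have \<sigma>: "continuous_map (subtopology (powertop_real UNIV) (standard_simplex p)) euclidean \<sigma>"
    by (simp add: singular_simplex_def)
  have "continuous_map (subtopology (powertop_real UNIV) (standard_simplex (Suc p))) (subtopology euclidean S)
      (cone_simplex p x0 \<sigma>)"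
    using cone_simplex_in_convex[OF \<sigma>S assms(2,3)]
    by (intro continuous_map_into_subtopology continuous_map_cone_simplex[OF \<sigma>]) auto
  then show ?thesis unfolding singular_simplex_def by (auto simp: cone_simplex_def)
qed

lemma singular_simplex_const_simplex:
  assumes "x0 \<in> S"
  shows "singular_simplex p (subtopology euclidean S) (const_simplex p x0)"
proof -
  have "continuous_map (subtopology (powertop_real UNIV) (standard_simplex p)) euclidean (const_simplex p x0)"
    unfolding const_simplex_def by (subst restrict_continuous_map) auto
  then show ?thesis using assms
    unfolding singular_simplex_subtopology singular_simplex_def by (auto simp: const_simplex_def)
qed

lemma singular_face_const_simplex:
  "1 \<le> p \<Longrightarrow> k \<le> p \<Longrightarrow> singular_face p k (const_simplex p x0) = const_simplex (p - 1) x0"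
  unfolding singular_face_def const_simplex_def
  by (auto simp: fun_eq_iff simplical_face_in_standard_simplex)

lemma singular_face_cone_simplex_0:
  assumes "\<sigma> \<in> extensional (standard_simplex p)"
  shows "singular_face (Suc p) 0 (cone_simplex p x0 \<sigma>) = \<sigma>"
proof
  fix t
  show "singular_face (Suc p) 0 (cone_simplex p x0 \<sigma>) t = \<sigma> t"
  proof (cases "t \<in> standard_simplex p")
    case True
    have "simplical_face 0 t \<in> standard_simplex (Suc p)"
      using simplical_face_in_standard_simplex[of "Suc p" 0 t] True by simp
    moreover have "(\<lambda>i. simplical_face 0 t (Suc i)) = t" by (simp add: simplical_face_def fun_eq_iff)
    ultimately show ?thesis
      using True by (simp add: singular_face_def cone_simplex_def cone_base_def simplical_face_def)
  next
    case False then show ?thesis using assms by (simp add: singular_face_def extensional_def)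
  qed
qed

lemma singular_face_cone_simplex_Suc:
  assumes p: "1 \<le> p" and j: "j \<le> p"
  shows "singular_face (Suc p) (Suc j) (cone_simplex p x0 \<sigma>) = cone_simplex (p - 1) x0 (singular_face p j \<sigma>)"
proof
  fix t
  show "singular_face (Suc p) (Suc j) (cone_simplex p x0 \<sigma>) t = cone_simplex (p - 1) x0 (singular_face p j \<sigma>) t"
  proof (cases "t \<in> standard_simplex p")
    case True
    have sp: "Suc (p - 1) = p" using p by simp
    have sf: "simplical_face (Suc j) t \<in> standard_simplex (Suc p)"
      using simplical_face_in_standard_simplex[of "Suc p" "Suc j" t] True j by simp
    have s0: "simplical_face (Suc j) t 0 = t 0" by (simp add: simplical_face_def)
    show ?thesis
    proof (cases "t 0 = 1")
      case True': True
      then show ?thesis using True sf s0 sp by (simp add: singular_face_def cone_simplex_def)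
    next
      case False
      have base: "cone_base t \<in> standard_simplex (p - 1)"
        using cone_base_in_standard_simplex[of t "p - 1"] True False sp by simp
      have "cone_base (simplical_face (Suc j) t) = simplical_face j (cone_base t)"
        by (auto simp: simplical_face_def cone_base_def fun_eq_iff)
      then show ?thesis using True sf s0 sp False base
        by (simp add: singular_face_def cone_simplex_def)
    qed
  next
    case False
    then show ?thesis using p by (simp add: singular_face_def cone_simplex_def)
  qed
qed

lemma singular_face_cone_simplex_0_1: "singular_face 1 1 (cone_simplex 0 x0 \<sigma>) = const_simplex 0 x0"
proof
  fix t
  show "singular_face 1 1 (cone_simplex 0 x0 \<sigma>) t = const_simplex 0 x0 t"
  proof (cases "t \<in> standard_simplex 0")
    case True
    then have t: "t = (\<lambda>j. if j = 0 then 1 else 0)" by (simp add: standard_simplex_0)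
    have sf: "simplical_face 1 t \<in> standard_simplex 1"
      using simplical_face_in_standard_simplex[of 1 1 t] True by simp
    have "simplical_face 1 t 0 = 1" using t by (simp add: simplical_face_def)
    then show ?thesis using True sf by (simp add: singular_face_def cone_simplex_def const_simplex_def)
  next
    case False then show ?thesis by (simp add: singular_face_def const_simplex_def)
  qed
qed

definition lin_ext :: "('s \<Rightarrow> 't \<Rightarrow> complex) \<Rightarrow> ('s \<Rightarrow> complex) \<Rightarrow> 't \<Rightarrow> complex" where
  "lin_ext F c = (\<lambda>\<tau>. \<Sum>\<sigma>\<in>{\<sigma>. c \<sigma> \<noteq> 0}. c \<sigma> * F \<sigma> \<tau>)"

definition delta :: "'s \<Rightarrow> 's \<Rightarrow> complex" where
  "delta s = (\<lambda>\<sigma>. if s = \<sigma> then 1 else 0)"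

lemma lin_ext_superset:
  "finite S \<Longrightarrow> {\<sigma>. c \<sigma> \<noteq> 0} \<subseteq> S \<Longrightarrow> lin_ext F c \<tau> = (\<Sum>\<sigma>\<in>S. c \<sigma> * F \<sigma> \<tau>)"
  unfolding lin_ext_def by (rule sum.mono_neutral_left) auto

lemma lin_ext_diff:
  assumes "finite {\<sigma>. x \<sigma> \<noteq> 0}" "finite {\<sigma>. y \<sigma> \<noteq> 0}"
  shows "lin_ext F (x - y) = lin_ext F x - lin_ext F y"
proof
  fix \<tau>
  let ?S = "{\<sigma>. x \<sigma> \<noteq> 0} \<union> {\<sigma>. y \<sigma> \<noteq> 0}"
  have f: "finite ?S" using assms by auto
  have "lin_ext F (x - y) \<tau> = (\<Sum>\<sigma>\<in>?S. (x - y) \<sigma> * F \<sigma> \<tau>)" by (rule lin_ext_superset[OF f]) auto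
  also have "\<dots> = (\<Sum>\<sigma>\<in>?S. x \<sigma> * F \<sigma> \<tau>) - (\<Sum>\<sigma>\<in>?S. y \<sigma> * F \<sigma> \<tau>)"
    by (simp add: sum_subtractf left_diff_distrib)
  also have "\<dots> = lin_ext F x \<tau> - lin_ext F y \<tau>"
  proof -
    have "lin_ext F x \<tau> = (\<Sum>\<sigma>\<in>?S. x \<sigma> * F \<sigma> \<tau>)" by (rule lin_ext_superset[OF f]) auto
    moreover have "lin_ext F y \<tau> = (\<Sum>\<sigma>\<in>?S. y \<sigma> * F \<sigma> \<tau>)" by (rule lin_ext_superset[OF f]) auto
    ultimately show ?thesis by simp
  qed
  finally show "lin_ext F (x - y) \<tau> = (lin_ext F x - lin_ext F y) \<tau>" by simp
qed

lemma lin_ext_csmul: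
  assumes "finite {\<sigma>. x \<sigma> \<noteq> 0}"
  shows "lin_ext F (csmul a x) = csmul a (lin_ext F x)"
proof
  fix \<tau>
  have "lin_ext F (csmul a x) \<tau> = (\<Sum>\<sigma>\<in>{\<sigma>. x \<sigma> \<noteq> 0}. csmul a x \<sigma> * F \<sigma> \<tau>)"
    by (rule lin_ext_superset[OF assms]) (auto simp: csmul_def)
  then show "lin_ext F (csmul a x) \<tau> = csmul a (lin_ext F x) \<tau>"
    by (simp add: csmul_def lin_ext_def sum_distrib_left mult.assoc)
qed

lemma lin_ext_delta: "lin_ext F (delta s) = F s"
proof
  fix \<tau>
  have "lin_ext F (delta s) \<tau> = (\<Sum>\<sigma>\<in>{s}. delta s \<sigma> * F \<sigma> \<tau>)"
    by (rule lin_ext_superset) (auto simp: delta_def)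
  then show "lin_ext F (delta s) \<tau> = F s \<tau>" by (simp add: delta_def)
qed

lemma lin_ext_delta_id:
  assumes "finite {\<sigma>. c \<sigma> \<noteq> 0}"
  shows "lin_ext delta c = c"
proof
  fix \<tau>
  have "lin_ext delta c \<tau> = (\<Sum>\<sigma>\<in>insert \<tau> {\<sigma>. c \<sigma> \<noteq> 0}. c \<sigma> * delta \<sigma> \<tau>)"
    by (rule lin_ext_superset) (use assms in auto)
  also have "\<dots> = (\<Sum>\<sigma>\<in>insert \<tau> {\<sigma>. c \<sigma> \<noteq> 0}. if \<sigma> = \<tau> then c \<sigma> else 0)"
    by (rule sum.cong) (auto simp: delta_def)
  also have "\<dots> = c \<tau>" using assms by (simp add: sum.delta)
  finally show "lin_ext delta c \<tau> = c \<tau>" .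
qed

lemma lin_ext_kernel_add: "lin_ext (\<lambda>\<sigma> \<tau>. F \<sigma> \<tau> + G \<sigma> \<tau>) c = (\<lambda>\<tau>. lin_ext F c \<tau> + lin_ext G c \<tau>)"
  by (simp add: lin_ext_def distrib_left sum.distrib)

lemma lin_ext_kernel_mult: "lin_ext (\<lambda>\<sigma> \<tau>. a * F \<sigma> \<tau>) c = csmul a (lin_ext F c)"
  by (simp add: lin_ext_def csmul_def sum_distrib_left algebra_simps)

lemma lin_ext_cong: "(\<And>\<sigma>. c \<sigma> \<noteq> 0 \<Longrightarrow> F \<sigma> = G \<sigma>) \<Longrightarrow> lin_ext F c = lin_ext G c"
  unfolding lin_ext_def by (rule ext, rule sum.cong) simp_all

lemma lin_ext_support:
  "{\<tau>. lin_ext F c \<tau> \<noteq> 0} \<subseteq> (\<Union>\<sigma>\<in>{\<sigma>. c \<sigma> \<noteq> 0}. {\<tau>. F \<sigma> \<tau> \<noteq> 0})"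
proof
  fix \<tau> assume "\<tau> \<in> {\<tau>. lin_ext F c \<tau> \<noteq> 0}"
  then have "(\<Sum>\<sigma>\<in>{\<sigma>. c \<sigma> \<noteq> 0}. c \<sigma> * F \<sigma> \<tau>) \<noteq> 0" by (simp add: lin_ext_def)
  then obtain \<sigma> where "\<sigma> \<in> {\<sigma>. c \<sigma> \<noteq> 0}" "c \<sigma> * F \<sigma> \<tau> \<noteq> 0"
    by (rule sum.not_neutral_contains_not_neutral)
  then show "\<tau> \<in> (\<Union>\<sigma>\<in>{\<sigma>. c \<sigma> \<noteq> 0}. {\<tau>. F \<sigma> \<tau> \<noteq> 0})" by auto
qed

lemma lin_ext_lin_ext:
  assumes c: "finite {\<sigma>. c \<sigma> \<noteq> 0}" and F: "\<And>\<sigma>. c \<sigma> \<noteq> 0 \<Longrightarrow> finite {\<tau>. F \<sigma> \<tau> \<noteq> 0}"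
  shows "lin_ext G (lin_ext F c) = lin_ext (\<lambda>\<sigma>. lin_ext G (F \<sigma>)) c"
proof
  fix \<tau>
  let ?A = "{\<sigma>. c \<sigma> \<noteq> 0}"
  let ?S = "\<Union>\<sigma>\<in>?A. {\<tau>. F \<sigma> \<tau> \<noteq> 0}"
  have fS: "finite ?S" using c F by auto
  have "lin_ext G (lin_ext F c) \<tau> = (\<Sum>\<rho>\<in>?S. lin_ext F c \<rho> * G \<rho> \<tau>)"
    by (rule lin_ext_superset[OF fS lin_ext_support])
  also have "\<dots> = (\<Sum>\<rho>\<in>?S. \<Sum>\<sigma>\<in>?A. c \<sigma> * F \<sigma> \<rho> * G \<rho> \<tau>)"
    by (simp add: lin_ext_def sum_distrib_right)
  also have "\<dots> = (\<Sum>\<sigma>\<in>?A. c \<sigma> * (\<Sum>\<rho>\<in>?S. F \<sigma> \<rho> * G \<rho> \<tau>))"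
    by (subst sum.swap) (simp add: sum_distrib_left mult.assoc)
  also have "\<dots> = (\<Sum>\<sigma>\<in>?A. c \<sigma> * lin_ext G (F \<sigma>) \<tau>)"
    by (rule sum.cong[OF refl]) (subst lin_ext_superset[OF fS], auto)
  also have "\<dots> = lin_ext (\<lambda>\<sigma>. lin_ext G (F \<sigma>)) c \<tau>" by (simp add: lin_ext_def)
  finally show "lin_ext G (lin_ext F c) \<tau> = lin_ext (\<lambda>\<sigma>. lin_ext G (F \<sigma>)) c \<tau>" .
qed

lemma coeff_sum_eq_lin_ext: "coeff_sum c = lin_ext (\<lambda>_ (_::unit). 1) c ()"
  by (simp add: coeff_sum_def lin_ext_def)

lemma coeff_sum_lin_ext:
  assumes c: "finite {\<sigma>. c \<sigma> \<noteq> 0}" and F: "\<And>\<sigma>. c \<sigma> \<noteq> 0 \<Longrightarrow> finite {\<tau>. F \<sigma> \<tau> \<noteq> 0}"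
  shows "coeff_sum (lin_ext F c) = (\<Sum>\<sigma>\<in>{\<sigma>. c \<sigma> \<noteq> 0}. c \<sigma> * coeff_sum (F \<sigma>))"
proof -
  have "coeff_sum (lin_ext F c) = lin_ext (\<lambda>_ (_::unit). 1) (lin_ext F c) ()" by (rule coeff_sum_eq_lin_ext)
  also have "\<dots> = lin_ext (\<lambda>\<sigma>. lin_ext (\<lambda>_ (_::unit). 1) (F \<sigma>)) c ()"
    using lin_ext_lin_ext[OF c F, where G = "\<lambda>_ (_::unit). 1"] by (rule fun_cong)
  also have "\<dots> = (\<Sum>\<sigma>\<in>{\<sigma>. c \<sigma> \<noteq> 0}. c \<sigma> * coeff_sum (F \<sigma>))"
    unfolding lin_ext_def[of "\<lambda>\<sigma>. lin_ext (\<lambda>_ _. 1) (F \<sigma>)"] by (simp only: coeff_sum_eq_lin_ext[symmetric])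
  finally show ?thesis .
qed

lemma finite_delta_support: "finite {\<tau>. delta s \<tau> \<noteq> 0}"
proof -
  have "{\<tau>. delta s \<tau> \<noteq> 0} \<subseteq> {s}" by (auto simp: delta_def)
  then show ?thesis by (rule finite_subset) simp
qed

lemma coeff_sum_delta: "coeff_sum (delta s) = 1"
proof -
  have "coeff_sum (delta s) = sum (delta s) {s}" by (rule coeff_sum_superset) (auto simp: delta_def)
  then show ?thesis by (simp add: delta_def)
qed

lemma delta_in_Zq: "delta s \<tau> \<in> Zq q"
  by (simp add: delta_def Zq_zero Zq_one)

section \<open>The q-border of singular chains\<close>

lemma qchains_finite_support: "x \<in> qchains q T n \<Longrightarrow> finite {\<sigma>. x \<sigma> \<noteq> 0}"
  by (simp add: qchains_def)

lemma qchains_values_Zq: "x \<in> qchains q T n \<Longrightarrow> x \<sigma> \<in> Zq q"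
  by (simp add: qchains_def)

lemma qchains_singular_simplex: "x \<in> qchains q T n \<Longrightarrow> x \<sigma> \<noteq> 0 \<Longrightarrow> 0 \<le> n \<and> singular_simplex (nat n) T \<sigma>"
  by (simp add: qchains_def)

lemma qchains_zero: "0 \<in> qchains q T n"
  by (simp add: qchains_def Zq_zero)

lemma qchains_diff:
  assumes "x \<in> qchains q T n" "y \<in> qchains q T n"
  shows "x - y \<in> qchains q T n"
proof -
  have "{\<sigma>. (x - y) \<sigma> \<noteq> 0} \<subseteq> {\<sigma>. x \<sigma> \<noteq> 0} \<union> {\<sigma>. y \<sigma> \<noteq> 0}" by auto
  then have "finite {\<sigma>. (x - y) \<sigma> \<noteq> 0}" using qchains_finite_support[OF assms(1)] qchains_finite_support[OF assms(2)] finite_subset by blast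
  moreover have "(x - y) \<sigma> \<in> Zq q" for \<sigma> using qchains_values_Zq[OF assms(1)] qchains_values_Zq[OF assms(2)] by (simp add: Zq_diff)
  moreover have "0 \<le> n \<and> singular_simplex (nat n) T \<sigma>" if "(x - y) \<sigma> \<noteq> 0" for \<sigma>
  proof -
    have "x \<sigma> \<noteq> 0 \<or> y \<sigma> \<noteq> 0" using that by auto
    then show ?thesis
    proof
      assume "x \<sigma> \<noteq> 0" then show ?thesis by (rule qchains_singular_simplex[OF assms(1)])
    next
      assume "y \<sigma> \<noteq> 0" then show ?thesis by (rule qchains_singular_simplex[OF assms(2)])
    qed
  qed
  ultimately show ?thesis by (simp add: qchains_def)
qed

lemma qchains_csmul:
  assumes "a \<in> Zq q" "x \<in> qchains q T n"
  shows "csmul a x \<in> qchains q T n"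
proof -
  have "{\<sigma>. csmul a x \<sigma> \<noteq> 0} \<subseteq> {\<sigma>. x \<sigma> \<noteq> 0}" by (auto simp: csmul_def)
  then have "finite {\<sigma>. csmul a x \<sigma> \<noteq> 0}" using qchains_finite_support[OF assms(2)] finite_subset by blast
  moreover have "csmul a x \<sigma> \<in> Zq q" for \<sigma> using qchains_values_Zq[OF assms(2)] assms(1) by (simp add: csmul_def Zq_mult)
  moreover have "0 \<le> n \<and> singular_simplex (nat n) T \<sigma>" if "csmul a x \<sigma> \<noteq> 0" for \<sigma>
    using that qchains_singular_simplex[OF assms(2)] by (auto simp: csmul_def)
  ultimately show ?thesis by (simp add: qchains_def)
qed

lemma qchains_negative_degree: "n < 0 \<Longrightarrow> x \<in> qchains q T n \<Longrightarrow> x = 0"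
  by (auto simp: qchains_def fun_eq_iff)

lemma lin_ext_in_qchains:
  assumes c: "c \<in> qchains q T n"
    and F: "\<And>\<sigma>. c \<sigma> \<noteq> 0 \<Longrightarrow> finite {\<tau>. F \<sigma> \<tau> \<noteq> 0}"
    and FZ: "\<And>\<sigma> \<tau>. c \<sigma> \<noteq> 0 \<Longrightarrow> F \<sigma> \<tau> \<in> Zq q"
    and FS: "\<And>\<sigma> \<tau>. c \<sigma> \<noteq> 0 \<Longrightarrow> F \<sigma> \<tau> \<noteq> 0 \<Longrightarrow> 0 \<le> m \<and> singular_simplex (nat m) T \<tau>"
  shows "lin_ext F c \<in> qchains q T m"
proof -
  have cf: "finite {\<sigma>. c \<sigma> \<noteq> 0}" and cZ: "\<And>\<sigma>. c \<sigma> \<in> Zq q" using c by (auto simp: qchains_def)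
  have "finite (\<Union>\<sigma>\<in>{\<sigma>. c \<sigma> \<noteq> 0}. {\<tau>. F \<sigma> \<tau> \<noteq> 0})" using cf F by auto
  then have "finite {\<tau>. lin_ext F c \<tau> \<noteq> 0}" using lin_ext_support finite_subset by metis
  moreover have "lin_ext F c \<tau> \<in> Zq q" for \<tau> unfolding lin_ext_def by (auto intro!: Zq_sum Zq_mult cZ FZ)
  moreover have "0 \<le> m \<and> singular_simplex (nat m) T \<tau>" if "lin_ext F c \<tau> \<noteq> 0" for \<tau>
  proof -
    have "\<tau> \<in> (\<Union>\<sigma>\<in>{\<sigma>. c \<sigma> \<noteq> 0}. {\<tau>. F \<sigma> \<tau> \<noteq> 0})" using lin_ext_support[of F c] that by blast
    then obtain \<sigma> where "c \<sigma> \<noteq> 0" "F \<sigma> \<tau> \<noteq> 0" by blast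
    then show ?thesis by (rule FS)
  qed
  ultimately show ?thesis by (auto simp: qchains_def)
qed

definition face_kernel ::
    "complex \<Rightarrow> nat \<Rightarrow> ((nat \<Rightarrow> real) \<Rightarrow> 'a) \<Rightarrow> ((nat \<Rightarrow> real) \<Rightarrow> 'a) \<Rightarrow> complex"
  where
  "face_kernel q p \<sigma> = (\<lambda>\<tau>. \<Sum>j\<le>p. if singular_face p j \<sigma> = \<tau> then q ^ j else 0)"

lemma qbd_eq_lin_ext: "qbd q n c = (if 1 \<le> n then lin_ext (face_kernel q (nat n)) c else 0)"
  unfolding qbd_def lin_ext_def face_kernel_def by (rule refl)

lemma face_kernel_support: "{\<tau>. face_kernel q p \<sigma> \<tau> \<noteq> 0} \<subseteq> (\<lambda>j. singular_face p j \<sigma>) ` {..p}"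
proof
  fix \<tau> assume "\<tau> \<in> {\<tau>. face_kernel q p \<sigma> \<tau> \<noteq> 0}"
  then have "(\<Sum>j\<le>p. if singular_face p j \<sigma> = \<tau> then q ^ j else 0) \<noteq> 0" by (simp add: face_kernel_def)
  then obtain j where "j \<in> {..p}" "(if singular_face p j \<sigma> = \<tau> then q ^ j else 0) \<noteq> 0"
    by (rule sum.not_neutral_contains_not_neutral)
  then have "j \<le> p" "singular_face p j \<sigma> = \<tau>" by (auto split: if_splits)
  then show "\<tau> \<in> (\<lambda>j. singular_face p j \<sigma>) ` {..p}" by auto
qed

lemma finite_face_kernel_support: "finite {\<tau>. face_kernel q p \<sigma> \<tau> \<noteq> 0}"
  by (rule finite_subset[OF face_kernel_support]) simp

lemma lin_ext_face_kernel: "lin_ext G (face_kernel q p \<sigma>) \<tau> = (\<Sum>j\<le>p. q ^ j * G (singular_face p j \<sigma>) \<tau>)"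
proof -
  let ?S = "(\<lambda>j. singular_face p j \<sigma>) ` {..p}"
  have "lin_ext G (face_kernel q p \<sigma>) \<tau> = (\<Sum>\<rho>\<in>?S. face_kernel q p \<sigma> \<rho> * G \<rho> \<tau>)"
    by (rule lin_ext_superset[OF _ face_kernel_support]) simp
  also have "\<dots> = (\<Sum>\<rho>\<in>?S. \<Sum>j\<le>p. (if singular_face p j \<sigma> = \<rho> then q ^ j * G \<rho> \<tau> else 0))"
    by (auto simp: face_kernel_def sum_distrib_right intro!: sum.cong)
  also have "\<dots> = (\<Sum>j\<le>p. \<Sum>\<rho>\<in>?S. (if singular_face p j \<sigma> = \<rho> then q ^ j * G \<rho> \<tau> else 0))"
    by (rule sum.swap)
  also have "\<dots> = (\<Sum>j\<le>p. q ^ j * G (singular_face p j \<sigma>) \<tau>)"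
    by (rule sum.cong[OF refl]) (simp add: sum.delta)
  finally show ?thesis .
qed

lemma coeff_sum_face_kernel: "coeff_sum (face_kernel q p \<sigma>) = qnum q (Suc p)"
proof -
  have "coeff_sum (face_kernel q p \<sigma>) = lin_ext (\<lambda>_ (_::unit). 1) (face_kernel q p \<sigma>) ()" by (rule coeff_sum_eq_lin_ext)
  also have "\<dots> = (\<Sum>j\<le>p. q ^ j * 1)" by (rule lin_ext_face_kernel)
  finally show ?thesis by (simp add: qnum_def lessThan_Suc_atMost)
qed

lemma face_kernel_in_Zq: "face_kernel q p \<sigma> \<tau> \<in> Zq q"
  unfolding face_kernel_def by (intro Zq_sum) (simp add: Zq_power Zq_q Zq_zero)

lemma qbd_mem:
  assumes x: "x \<in> qchains q T n"
  shows "qbd q n x \<in> qchains q T (n - 1)"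
proof (cases "1 \<le> n")
  case True
  have "lin_ext (face_kernel q (nat n)) x \<in> qchains q T (n - 1)"
  proof (rule lin_ext_in_qchains[OF x finite_face_kernel_support face_kernel_in_Zq])
    fix \<sigma> \<tau> assume s: "x \<sigma> \<noteq> 0" and t: "face_kernel q (nat n) \<sigma> \<tau> \<noteq> 0"
    obtain j where j: "j \<le> nat n" "\<tau> = singular_face (nat n) j \<sigma>" using face_kernel_support[of q "nat n" \<sigma>] t by blast
    have "singular_simplex (nat n) T \<sigma>" using qchains_singular_simplex[OF x s] by simp
    then have "singular_simplex (nat n - Suc 0) T \<tau>"
      using singular_simplex_singular_face[of "nat n" _ \<sigma> j] j True by simp
    moreover have "nat n - Suc 0 = nat (n - 1)" using True by simp
    ultimately show "0 \<le> n - 1 \<and> singular_simplex (nat (n - 1)) T \<tau>" using True by simp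
  qed
  then show ?thesis using True by (simp add: qbd_eq_lin_ext)
qed (simp add: qbd_eq_lin_ext qchains_zero)

lemma qbd_diff:
  assumes "x \<in> qchains q T n" "y \<in> qchains q T n"
  shows "qbd q n (x - y) = qbd q n x - qbd q n y"
  by (simp add: qbd_eq_lin_ext lin_ext_diff[OF qchains_finite_support[OF assms(1)] qchains_finite_support[OF assms(2)]])

lemma qbd_csmul:
  assumes "a \<in> Zq q" "x \<in> qchains q T n"
  shows "qbd q n (csmul a x) = csmul a (qbd q n x)"
  by (simp add: qbd_eq_lin_ext lin_ext_csmul[OF qchains_finite_support[OF assms(2)]])

lemma coeff_sum_qbd:
  assumes n: "1 \<le> n" and x: "x \<in> qchains q T n"
  shows "coeff_sum (qbd q n x) = qnum q (nat n + 1) * coeff_sum x"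
proof -
  have "coeff_sum (qbd q n x) = coeff_sum (lin_ext (face_kernel q (nat n)) x)" using n by (simp add: qbd_eq_lin_ext)
  also have "\<dots> = (\<Sum>\<sigma>\<in>{\<sigma>. x \<sigma> \<noteq> 0}. x \<sigma> * coeff_sum (face_kernel q (nat n) \<sigma>))"
    by (rule coeff_sum_lin_ext[OF qchains_finite_support[OF x] finite_face_kernel_support])
  also have "\<dots> = qnum q (nat n + 1) * coeff_sum x"
    by (simp only: coeff_sum_face_kernel) (simp add: coeff_sum_def sum_distrib_left mult.commute)
  finally show ?thesis .
qed

definition cone_htpy ::
    "'b::real_vector \<Rightarrow> int \<Rightarrow> (((nat \<Rightarrow> real) \<Rightarrow> 'b) \<Rightarrow> complex) \<Rightarrow> ((nat \<Rightarrow> real) \<Rightarrow> 'b) \<Rightarrow> complex"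
  where
  "cone_htpy x0 n c = (if 0 \<le> n then lin_ext (\<lambda>\<sigma>. delta (cone_simplex (nat n) x0 \<sigma>)) c else 0)"

definition const_chain :: "'b \<Rightarrow> int \<Rightarrow> (((nat \<Rightarrow> real) \<Rightarrow> 'b) \<Rightarrow> complex)" where
  "const_chain x0 n = delta (const_simplex (nat n) x0)"

lemma face_kernel_cone_simplex:
  assumes p: "1 \<le> p" and \<sigma>: "\<sigma> \<in> extensional (standard_simplex p)"
  shows "face_kernel q (Suc p) (cone_simplex p x0 \<sigma>) =
    (\<lambda>\<tau>. delta \<sigma> \<tau> + q * lin_ext (\<lambda>\<rho>. delta (cone_simplex (p - 1) x0 \<rho>)) (face_kernel q p \<sigma>) \<tau>)"
proof
  fix \<tau>
  have "face_kernel q (Suc p) (cone_simplex p x0 \<sigma>) \<tau>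
      = (if singular_face (Suc p) 0 (cone_simplex p x0 \<sigma>) = \<tau> then 1 else 0)
        + (\<Sum>j\<le>p. if singular_face (Suc p) (Suc j) (cone_simplex p x0 \<sigma>) = \<tau> then q ^ Suc j else 0)"
    unfolding face_kernel_def by (subst sum.atMost_Suc_shift) simp
  also have "\<dots> = delta \<sigma> \<tau> + (\<Sum>j\<le>p. q * (q ^ j * delta (cone_simplex (p - 1) x0 (singular_face p j \<sigma>)) \<tau>))"
    using p by (auto simp: singular_face_cone_simplex_0[OF \<sigma>] singular_face_cone_simplex_Suc delta_def
        intro!: sum.cong)
  also have "\<dots> = delta \<sigma> \<tau> + q * lin_ext (\<lambda>\<rho>. delta (cone_simplex (p - 1) x0 \<rho>)) (face_kernel q p \<sigma>) \<tau>"
    by (simp add: lin_ext_face_kernel sum_distrib_left)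
  finally show "face_kernel q (Suc p) (cone_simplex p x0 \<sigma>) \<tau> =
    delta \<sigma> \<tau> + q * lin_ext (\<lambda>\<rho>. delta (cone_simplex (p - 1) x0 \<rho>)) (face_kernel q p \<sigma>) \<tau>" .
qed

lemma face_kernel_cone_simplex_0:
  assumes \<sigma>: "\<sigma> \<in> extensional (standard_simplex 0)"
  shows "face_kernel q 1 (cone_simplex 0 x0 \<sigma>) = (\<lambda>\<tau>. delta \<sigma> \<tau> + q * delta (const_simplex 0 x0) \<tau>)"
proof (rule ext)
  fix \<tau>
  have "face_kernel q 1 (cone_simplex 0 x0 \<sigma>) \<tau> = (if singular_face 1 0 (cone_simplex 0 x0 \<sigma>) = \<tau> then 1 else 0)
     + (if singular_face 1 1 (cone_simplex 0 x0 \<sigma>) = \<tau> then q else 0)"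
    unfolding face_kernel_def by (simp add: atMost_Suc)
  also have "\<dots> = delta \<sigma> \<tau> + q * delta (const_simplex 0 x0) \<tau>"
    using singular_face_cone_simplex_0[OF \<sigma>, of x0] singular_face_cone_simplex_0_1[of x0 \<sigma>] by (simp add: delta_def)
  finally show "face_kernel q 1 (cone_simplex 0 x0 \<sigma>) \<tau> = delta \<sigma> \<tau> + q * delta (const_simplex 0 x0) \<tau>" .
qed


lemma cone_htpy_diff:
  assumes "x \<in> qchains q T n" "y \<in> qchains q T n"
  shows "cone_htpy x0 n (x - y) = cone_htpy x0 n x - cone_htpy x0 n y"
  by (simp add: cone_htpy_def lin_ext_diff[OF qchains_finite_support[OF assms(1)] qchains_finite_support[OF assms(2)]])

lemma cone_htpy_csmul:
  assumes "a \<in> Zq q" "x \<in> qchains q T n"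
  shows "cone_htpy x0 n (csmul a x) = csmul a (cone_htpy x0 n x)"
  by (simp add: cone_htpy_def lin_ext_csmul[OF qchains_finite_support[OF assms(2)]])

lemma coeff_sum_const_chain: "coeff_sum (const_chain x0 n) = 1"
  by (simp add: const_chain_def coeff_sum_delta)

lemma qbd_const_chain:
  assumes "1 \<le> n"
  shows "qbd q n (const_chain x0 n) = csmul (qnum q (nat n + 1)) (const_chain x0 (n - 1))"
proof -
  have "qbd q n (const_chain x0 n) = face_kernel q (nat n) (const_simplex (nat n) x0)"
    using assms by (simp add: qbd_eq_lin_ext const_chain_def lin_ext_delta)
  also have "\<dots> = (\<lambda>\<tau>. \<Sum>j\<le>nat n. if const_simplex (nat n - 1) x0 = \<tau> then q ^ j else 0)"
    using assms unfolding face_kernel_def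
    by (intro ext sum.cong) (simp_all add: singular_face_const_simplex)
  also have "\<dots> = csmul (qnum q (nat n + 1)) (const_chain x0 (n - 1))"
  proof (rule ext)
    fix \<tau>
    have "nat (n - 1) = nat n - 1" using assms by simp
    then show "(\<Sum>j\<le>nat n. if const_simplex (nat n - 1) x0 = \<tau> then q ^ j else 0) =
        csmul (qnum q (nat n + 1)) (const_chain x0 (n - 1)) \<tau>"
      unfolding csmul_def const_chain_def delta_def qnum_def by (simp add: lessThan_Suc_atMost)
  qed
  finally show ?thesis .
qed

lemma qbd_cone_htpy_eq_lin_ext:
  assumes x: "x \<in> qchains q T n" and n: "0 \<le> n"
  shows "qbd q (n + 1) (cone_htpy x0 n x) =
    lin_ext (\<lambda>\<sigma>. face_kernel q (Suc (nat n)) (cone_simplex (nat n) x0 \<sigma>)) x"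
proof -
  have "qbd q (n + 1) (cone_htpy x0 n x)
      = lin_ext (face_kernel q (Suc (nat n))) (lin_ext (\<lambda>\<sigma>. delta (cone_simplex (nat n) x0 \<sigma>)) x)"
    using n by (simp add: qbd_eq_lin_ext cone_htpy_def nat_add_distrib)
  also have "\<dots> = lin_ext (\<lambda>\<sigma>. lin_ext (face_kernel q (Suc (nat n))) (delta (cone_simplex (nat n) x0 \<sigma>))) x"
    by (rule lin_ext_lin_ext[OF qchains_finite_support[OF x] finite_delta_support])
  finally show ?thesis by (simp only: lin_ext_delta)
qed

lemma qbd_cone_htpy_pos:
  assumes x: "x \<in> qchains q T n" and n: "1 \<le> n"
  shows "qbd q (n + 1) (cone_htpy x0 n x) = x + csmul q (cone_htpy x0 (n - 1) (qbd q n x))"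
proof -
  define p where "p = nat n"
  have p: "1 \<le> p" using n by (simp add: p_def)
  have xf: "finite {\<sigma>. x \<sigma> \<noteq> 0}" by (rule qchains_finite_support[OF x])
  have ext: "\<sigma> \<in> extensional (standard_simplex p)" if "x \<sigma> \<noteq> 0" for \<sigma>
    using qchains_singular_simplex[OF x that] by (simp add: singular_simplex_def p_def)
  define K where "K \<sigma> = lin_ext (\<lambda>\<rho>. delta (cone_simplex (p - 1) x0 \<rho>)) (face_kernel q p \<sigma>)" for \<sigma>
  have "qbd q (n + 1) (cone_htpy x0 n x) = lin_ext (\<lambda>\<sigma>. face_kernel q (Suc p) (cone_simplex p x0 \<sigma>)) x"
    using qbd_cone_htpy_eq_lin_ext[OF x] n by (simp add: p_def)
  also have "\<dots> = lin_ext (\<lambda>\<sigma> \<tau>. delta \<sigma> \<tau> + q * K \<sigma> \<tau>) x"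
    by (rule lin_ext_cong) (simp add: face_kernel_cone_simplex[OF p ext] K_def)
  also have "\<dots> = x + csmul q (lin_ext K x)"
    by (simp only: lin_ext_kernel_add lin_ext_kernel_mult lin_ext_delta_id[OF xf]) (simp add: plus_fun_def)
  also have "lin_ext K x = cone_htpy x0 (n - 1) (qbd q n x)"
  proof -
    have "cone_htpy x0 (n - 1) (qbd q n x)
        = lin_ext (\<lambda>\<rho>. delta (cone_simplex (p - 1) x0 \<rho>)) (lin_ext (face_kernel q p) x)"
      using n by (simp add: qbd_eq_lin_ext cone_htpy_def p_def nat_diff_distrib)
    also have "\<dots> = lin_ext K x"
      unfolding K_def by (rule lin_ext_lin_ext[OF xf finite_face_kernel_support])
    finally show ?thesis by simp
  qed
  finally show ?thesis .
qed

text \<open>In degree 0 the cone on a point \<open>\<sigma>\<close> has border \<open>\<sigma> + q x\<^sub>0\<close>, so the apex terms cancel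
  exactly when the augmentation vanishes.\<close>
lemma qbd_cone_htpy_0:
  assumes x: "x \<in> qchains q T 0" and e: "coeff_sum x = 0"
  shows "qbd q 1 (cone_htpy x0 0 x) = x"
proof -
  have xf: "finite {\<sigma>. x \<sigma> \<noteq> 0}" by (rule qchains_finite_support[OF x])
  have "qbd q 1 (cone_htpy x0 0 x) = lin_ext (\<lambda>\<sigma>. face_kernel q 1 (cone_simplex 0 x0 \<sigma>)) x"
    using qbd_cone_htpy_eq_lin_ext[OF x, of x0] by simp
  also have "\<dots> = lin_ext (\<lambda>\<sigma> \<tau>. delta \<sigma> \<tau> + q * delta (const_simplex 0 x0) \<tau>) x"
  proof (rule lin_ext_cong)
    fix \<sigma> assume "x \<sigma> \<noteq> 0"
    then have "\<sigma> \<in> extensional (standard_simplex 0)"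
      using qchains_singular_simplex[OF x] by (simp add: singular_simplex_def)
    then show "face_kernel q 1 (cone_simplex 0 x0 \<sigma>) = (\<lambda>\<tau>. delta \<sigma> \<tau> + q * delta (const_simplex 0 x0) \<tau>)"
      by (rule face_kernel_cone_simplex_0)
  qed
  also have "\<dots> = x + csmul q (lin_ext (\<lambda>\<sigma> \<tau>. delta (const_simplex 0 x0) \<tau>) x)"
    by (simp only: lin_ext_kernel_add lin_ext_kernel_mult lin_ext_delta_id[OF xf]) (simp add: plus_fun_def)
  also have "lin_ext (\<lambda>\<sigma> \<tau>. delta (const_simplex 0 x0) \<tau>) x = csmul (coeff_sum x) (delta (const_simplex 0 x0))"
    by (simp add: lin_ext_def csmul_def coeff_sum_def sum_distrib_right fun_eq_iff)
  finally show ?thesis using e by (simp add: csmul_def fun_eq_iff)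
qed

lemma qbd_cone_htpy:
  assumes "x \<in> qchains q T n" "0 \<le> n" "n = 0 \<Longrightarrow> coeff_sum x = 0"
  shows "qbd q (n + 1) (cone_htpy x0 n x) = x + csmul q (cone_htpy x0 (n - 1) (qbd q n x))"
proof (cases "n = 0")
  case True
  then show ?thesis using assms qbd_cone_htpy_0[of x q T x0] by (simp add: cone_htpy_def)
next
  case False
  then show ?thesis using assms(1,2) by (intro qbd_cone_htpy_pos) auto
qed

context
  fixes S :: "'b::real_normed_vector set" and x0 :: 'b
  assumes x0: "x0 \<in> S" and S: "convex S"
begin

lemma cone_htpy_mem:
  assumes x: "x \<in> qchains q (subtopology euclidean S) n"
  shows "cone_htpy x0 n x \<in> qchains q (subtopology euclidean S) (n + 1)"
proof (cases "0 \<le> n")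
  case True
  have "lin_ext (\<lambda>\<sigma>. delta (cone_simplex (nat n) x0 \<sigma>)) x \<in> qchains q (subtopology euclidean S) (n + 1)"
  proof (rule lin_ext_in_qchains[OF x finite_delta_support delta_in_Zq])
    fix \<sigma> \<tau> assume s: "x \<sigma> \<noteq> 0" and t: "delta (cone_simplex (nat n) x0 \<sigma>) \<tau> \<noteq> 0"
    have t': "\<tau> = cone_simplex (nat n) x0 \<sigma>" using t by (simp add: delta_def split: if_splits)
    have "singular_simplex (nat n) (subtopology euclidean S) \<sigma>" using qchains_singular_simplex[OF x s] by simp
    then have "singular_simplex (Suc (nat n)) (subtopology euclidean S) \<tau>"
      unfolding t' by (rule singular_simplex_cone_simplex[OF _ x0 S])
    moreover have "Suc (nat n) = nat (n + 1)" using True by simp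
    ultimately show "0 \<le> n + 1 \<and> singular_simplex (nat (n + 1)) (subtopology euclidean S) \<tau>" using True by simp
  qed
  then show ?thesis using True by (simp add: cone_htpy_def)
qed (simp add: cone_htpy_def qchains_zero)

lemma const_chain_mem:
  assumes "0 \<le> n" shows "const_chain x0 n \<in> qchains q (subtopology euclidean S) n"
proof -
  have "delta (const_simplex (nat n) x0) \<sigma> \<noteq> 0 \<Longrightarrow> 0 \<le> n \<and> singular_simplex (nat n) (subtopology euclidean S) \<sigma>" for \<sigma>
    using assms singular_simplex_const_simplex[OF x0, of "nat n"] by (simp add: delta_def split: if_splits)
  then show ?thesis unfolding qchains_def const_chain_def using finite_delta_support[of "const_simplex (nat n) x0"] delta_in_Zq[of _ _ q] by auto
qed

lemma qcontractible_complex_qchains: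
  assumes "prime N" "3 \<le> N" "q ^ N = 1" "q \<noteq> 1"
  shows "qcontractible_complex (qchains q (subtopology euclidean S)) (qbd q) (cone_htpy x0) (const_chain x0) q N"
proof (intro qcontractible_complex.intro graded_group.intro qcontractible_complex_axioms.intro assms)
  fix n :: int and x y :: "((nat \<Rightarrow> real) \<Rightarrow> 'b) \<Rightarrow> complex" and a \<sigma>
  assume x: "x \<in> qchains q (subtopology euclidean S) n"
  show "finite {\<sigma>. x \<sigma> \<noteq> 0}" "x \<sigma> \<in> Zq q"
    using x by (simp_all add: qchains_finite_support qchains_values_Zq)
  show "qbd q n x \<in> qchains q (subtopology euclidean S) (n - 1)"
    "cone_htpy x0 n x \<in> qchains q (subtopology euclidean S) (n + 1)"
    using x by (simp_all add: qbd_mem cone_htpy_mem)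
  show "n < 0 \<Longrightarrow> x = 0" using x by (simp add: qchains_negative_degree)
  show "1 \<le> n \<Longrightarrow> coeff_sum (qbd q n x) = qnum q (nat n + 1) * coeff_sum x"
    using x by (simp add: coeff_sum_qbd)
  show "0 \<le> n \<Longrightarrow> (n = 0 \<Longrightarrow> coeff_sum x = 0) \<Longrightarrow>
      qbd q (n + 1) (cone_htpy x0 n x) = x + csmul q (cone_htpy x0 (n - 1) (qbd q n x))"
    using x by (rule qbd_cone_htpy)
  show "a \<in> Zq q \<Longrightarrow> csmul a x \<in> qchains q (subtopology euclidean S) n"
    "a \<in> Zq q \<Longrightarrow> qbd q n (csmul a x) = csmul a (qbd q n x)"
    "a \<in> Zq q \<Longrightarrow> cone_htpy x0 n (csmul a x) = csmul a (cone_htpy x0 n x)"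
    using x by (simp_all add: qchains_csmul qbd_csmul cone_htpy_csmul)
  assume y: "y \<in> qchains q (subtopology euclidean S) n"
  show "x - y \<in> qchains q (subtopology euclidean S) n" "qbd q n (x - y) = qbd q n x - qbd q n y"
    "cone_htpy x0 n (x - y) = cone_htpy x0 n x - cone_htpy x0 n y"
    using x y by (simp_all add: qchains_diff qbd_diff cone_htpy_diff)
next
  fix n :: int
  show "0 \<in> qchains q (subtopology euclidean S) n" by (rule qchains_zero)
  show "0 \<le> n \<Longrightarrow> const_chain x0 n \<in> qchains q (subtopology euclidean S) n" by (rule const_chain_mem)
  show "0 \<le> n \<Longrightarrow> coeff_sum (const_chain x0 n) = 1" by (rule coeff_sum_const_chain)
  show "1 \<le> n \<Longrightarrow> qbd q n (const_chain x0 n) = csmul (qnum q (nat n + 1)) (const_chain x0 (n - 1))"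
    by (rule qbd_const_chain)
qed
end
theorem theorem5p2:
  fixes N :: nat and q :: complex and X :: "(real ^ 'n) set"
  assumes "prime N" and "N \<ge> 3"
    and "q ^ N = 1" and "q \<noteq> 1"
    and "CARD('n) = N - 1"
    and "convex X" and "X \<noteq> {}"
  shows "\<forall>m n. 1 \<le> m \<and> m \<le> N - 1 \<longrightarrow>
     (\<forall>a\<in>Zq q. \<forall>x\<in>qchains q (subtopology euclidean X) n. \<forall>y\<in>qchains q (subtopology euclidean X) n.
        eta N n (\<lambda>\<sigma>. a * x \<sigma> + y \<sigma>) = a * eta N n x + eta N n y)
   \<and> bij_betw (amp_induced (eta N) (zq_cx q N) (zq_d q N) N m n)
       (amp_hom (qchains q (subtopology euclidean X)) (qbd q) N m n)
       (amp_hom (zq_cx q N) (zq_d q N) N m n)"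
proof -
  obtain x0 where x0: "x0 \<in> X" using assms(7) by blast
  interpret qcontractible_complex "qchains q (subtopology euclidean X)" "qbd q" "cone_htpy x0" "const_chain x0" q N
    using qcontractible_complex_qchains[OF x0 assms(6,1,2,3,4)] .
  have "index_map N n (\<lambda>\<sigma>. a * x \<sigma> + y \<sigma>) = a * index_map N n x + index_map N n y"
    if "x \<in> qchains q (subtopology euclidean X) n" "y \<in> qchains q (subtopology euclidean X) n" for n a x y
    using coeff_sum_linear[OF finite_support[OF that(1)] finite_support[OF that(2)]]
    by (simp add: index_map_def)
  then show ?thesis
    by (simp add: eta_eq_index_map bij_betw_amp_induced_index_map)
qed

end
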